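(* Let $(\mathbb{H}_n)_{n\geq 2}$ be a family of $3$-uniform hypergraphs $\mathbb{H}_n=\langle V_n,E_n\rangle$ without isolated vertices such that each $\mathbb{H}_n$ is not $2$-colourable and has girth greater than $3\binom{3n}{2}$. Let $\mathcal{V}$ be an ai-semiring variety that contains $S_c(abc)$. For each $n\geq 2$ let $\mathbf{w}_n$ be a non-hyperedge term for $\mathbb{H}_n$. If $\mathcal{V}$ satisfies the identity $$\mathbf{t}_{\mathbb{H}_n}\approx \mathbf{t}_{\mathbb{H}_n}+\mathbf{w}_n$$ for every $n\geq 2$, then $\mathcal{V}$ is nonfinitely based (has no finite basis for its identities).
   Context: An ai-semiring (additively idempotent semiring) is an algebra $(S,+,\cdot)$ with $(S,+)$ a commutative idempotent semigroup, $(S,\cdot)$ a semigroup, and $(x+y)z\approx xz+yz$, $x(y+z)\approx xy+xz$. Ai-semiring terms over a countable variable set $X$ are finite sums of nonempty words in $X^+$; an identity $\mathbf{u}\approx\mathbf{v}$ is a pair of terms. A variety is finitely based if it can be defined by finitely many identities. A flat semiring is an ai-semiring whose multiplicative reduct has a zero element $\infty$ and in which $x+y=\infty$ for all distinct $x,y$. $S_c(abc)$ is the flat semiring whose elements are $\infty$ together with the nonempty subwords of $abc$ in the free commutative semigroup on $\{a,b,c\}$ (i.e. $a,b,c,ab,ac,bc,abc$); the product of two such words $\mathbf u,\mathbf v$ is $\mathbf u\mathbf v$ if $\mathbf u\mathbf v$ is again such a subword, and $\infty$ otherwise; $\infty$ is a multiplicative zero; addition is $x+x=x$, $x+y=\infty$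 for $x\neq y$. A $3$-uniform hypergraph $\mathbb{H}=\langle V,E\rangle$ has a vertex set $V$ and a family $E$ of $3$-element subsets of $V$ (hyperedges). It is $2$-colourable if there is $\varphi:V\to\{0,1\}$ with $|\varphi(e)|=2$ for every $e\in E$. A cycle is a sequence $v_1,e_1,v_2,e_2,\dots,v_n,e_n$ of vertices and hyperedges without repetitions, with $v_1\in e_1\cap e_n$ and $v_{i+1}\in e_i\cap e_{i+1}$ for $1\le i<n$; its length is $n$, and the girth is the length of a shortest cycle. For a $3$-uniform hypergraph $\mathbb{H}=\langle V,E\rangle$ without isolated vertices and of girth at least $5$, the hypergraph semiring $S_{\mathbb{H}}$ is the flat semiring with pairwise distinct elements $\infty$, $\mathbf a$, $\mathbf a_v$ ($v\in V$), $\mathbf c_v$ ($v\in V$), with flat addition, $\infty$ a multiplicative zero, and commutative multiplication given by: $\mathbf a_u\mathbf a_v=\mathbf c_w$ if $\{u,v,w\}\in E$; $\mathbf a_v\mathbf c_v=\mathbf c_v\mathbf a_v=\mathbf a$; all other products equal $\infty$. (Equivalently, it is the flat semiring generated by $\{\mathbf a_v\}$ and $\infty$ subject to: commutativity; $\mathbf a_u\mathbf a_v=\infty$ unless $\{u,v\}$ lies in a hyperedge; $\mathbf a_{u_1}\mathbf a_{u_2}\mathbf a_{u_3}=\mathbf a_{v_1}\mathbf a_{v_2}\mathbf a_{v_3}=:\mathbf a$ for hyperedges $\{u_i\},\{v_i\}$; $\mathbf a_{u_1}\mathbf a_{u_2}=\mathbf a_{v_1}\mathbf a_{v_2}$ whenever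 $\{u_1,u_2,w\},\{v_1,v_2,w\}\in E$.) For such $\mathbb H$ take variables $\{x_v\mid v\in V\}$. A hyperedge product is a word $x_{v_1}x_{v_2}x_{v_3}$ with $\{v_1,v_2,v_3\}\in E$ (any order). $\mathbf{t}_{\mathbb H}$ denotes the sum of all hyperedge products. A non-hyperedge term for $\mathbb H$ is any ai-semiring term $\mathbf w$ in the variables $\{x_v\}$ whose value in $S_{\mathbb H}$ under the assignment $x_v\mapsto \mathbf a_v$ is not $\mathbf a$. *)

theory Defs
  imports Main
begin

text \<open>An ai-semiring term is a finite nonempty
sum of words; since + is associative, commutative and idempotent, a term is represented
by the finite nonempty set of its words (this is the free ai-semiring on X).\<close>

type_synonym aiterm = "nat list set"

definition is_term :: "aiterm \<Rightarrow> bool" where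
  "is_term t \<longleftrightarrow> finite t \<and> t \<noteq> {} \<and> (\<forall>w\<in>t. w \<noteq> [])"

definition tsum :: "aiterm \<Rightarrow> aiterm \<Rightarrow> aiterm" where
  "tsum s t = s \<union> t"

definition tprod :: "aiterm \<Rightarrow> aiterm \<Rightarrow> aiterm" where
  "tprod s t = {u @ v | u v. u \<in> s \<and> v \<in> t}"

fun wsubst :: "(nat \<Rightarrow> aiterm) \<Rightarrow> nat list \<Rightarrow> aiterm" where
  "wsubst \<sigma> [] = {[]}"
| "wsubst \<sigma> [x] = \<sigma> x"
| "wsubst \<sigma> (x # y # ys) = tprod (\<sigma> x) (wsubst \<sigma> (y # ys))"

definition tsubst :: "(nat \<Rightarrow> aiterm) \<Rightarrow> aiterm \<Rightarrow> aiterm" where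
  "tsubst \<sigma> t = (\<Union>w\<in>t. wsubst \<sigma> w)"

text \<open>Equational deduction (Birkhoff) from a set of identities; the ai-semiring axioms
are built into the representation of terms.\<close>

inductive derivable :: "(aiterm \<times> aiterm) set \<Rightarrow> aiterm \<Rightarrow> aiterm \<Rightarrow> bool"
  for \<Sigma> where
  refl: "is_term u \<Longrightarrow> derivable \<Sigma> u u"
| sym: "derivable \<Sigma> u v \<Longrightarrow> derivable \<Sigma> v u"
| trans: "derivable \<Sigma> u v \<Longrightarrow> derivable \<Sigma> v w \<Longrightarrow> derivable \<Sigma> u w"
| ax: "(u, v) \<in> \<Sigma> \<Longrightarrow> (\<forall>x. is_term (\<sigma> x)) \<Longrightarrow> derivable \<Sigma> (tsubst \<sigma> u) (tsubst \<sigma> v)"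
| plus: "derivable \<Sigma> u v \<Longrightarrow> is_term t \<Longrightarrow> derivable \<Sigma> (tsum u t) (tsum v t)"
| mult_l: "derivable \<Sigma> u v \<Longrightarrow> is_term t \<Longrightarrow> derivable \<Sigma> (tprod t u) (tprod t v)"
| mult_r: "derivable \<Sigma> u v \<Longrightarrow> is_term t \<Longrightarrow> derivable \<Sigma> (tprod u t) (tprod v t)"

definition identity_set :: "(aiterm \<times> aiterm) set \<Rightarrow> bool" where
  "identity_set \<Sigma> \<longleftrightarrow> (\<forall>(u, v)\<in>\<Sigma>. is_term u \<and> is_term v)"

definition finitely_based :: "(aiterm \<times> aiterm) set \<Rightarrow> bool" where
  "finitely_based \<Sigma> \<longleftrightarrow> (\<exists>\<Sigma>'. finite \<Sigma>' \<and> identity_set \<Sigma>' \<and>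
      (\<forall>(u, v)\<in>\<Sigma>'. derivable \<Sigma> u v) \<and> (\<forall>(u, v)\<in>\<Sigma>. derivable \<Sigma>' u v))"

fun wval :: "('a \<Rightarrow> 'a \<Rightarrow> 'a) \<Rightarrow> (nat \<Rightarrow> 'a) \<Rightarrow> nat list \<Rightarrow> 'a" where
  "wval mul \<phi> [] = undefined"
| "wval mul \<phi> [x] = \<phi> x"
| "wval mul \<phi> (x # y # ys) = mul (\<phi> x) (wval mul \<phi> (y # ys))"

definition tval :: "'a \<Rightarrow> ('a \<Rightarrow> 'a \<Rightarrow> 'a) \<Rightarrow> (nat \<Rightarrow> 'a) \<Rightarrow> aiterm \<Rightarrow> 'a" where
  "tval zr mul \<phi> t = (if \<exists>x. wval mul \<phi> ` t = {x} then the_elem (wval mul \<phi> ` t) else zr)"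

text \<open>Elements: None is \<infinity>; Some s with s a nonempty subset of {0,1,2} stands for the
subword of abc (in the free commutative semigroup) with letters s (0=a,1=b,2=c).\<close>

definition Sc_carrier :: "nat set option set" where
  "Sc_carrier = {None} \<union> Some ` {s. s \<noteq> {} \<and> s \<subseteq> {0, 1, 2}}"

fun Sc_mul :: "nat set option \<Rightarrow> nat set option \<Rightarrow> nat set option" where
  "Sc_mul (Some s) (Some t) = (if s \<inter> t = {} then Some (s \<union> t) else None)"
| "Sc_mul _ _ = None"

definition Sc_satisfies :: "aiterm \<Rightarrow> aiterm \<Rightarrow> bool" where
  "Sc_satisfies u v \<longleftrightarrow> (\<forall>\<phi>. (\<forall>x. \<phi> x \<in> Sc_carrier) \<longrightarrow>
      tval None Sc_mul \<phi> u = tval None Sc_mul \<phi> v)"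

definition three_uniform :: "nat set \<Rightarrow> nat set set \<Rightarrow> bool" where
  "three_uniform V E \<longleftrightarrow> finite V \<and> (\<forall>e\<in>E. e \<subseteq> V \<and> card e = 3)"

definition no_isolated :: "nat set \<Rightarrow> nat set set \<Rightarrow> bool" where
  "no_isolated V E \<longleftrightarrow> (\<forall>v\<in>V. \<exists>e\<in>E. v \<in> e)"

definition two_colourable :: "nat set \<Rightarrow> nat set set \<Rightarrow> bool" where
  "two_colourable V E \<longleftrightarrow> (\<exists>\<phi> :: nat \<Rightarrow> bool. \<forall>e\<in>E. card (\<phi> ` e) = 2)"

definition has_cycle_of_length :: "nat set set \<Rightarrow> nat \<Rightarrow> bool" where
  "has_cycle_of_length E k \<longleftrightarrow> (\<exists>vs es. k \<ge> 2 \<and> length vs = k \<and> length es = k \<and>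
      distinct vs \<and> distinct es \<and> set es \<subseteq> E \<and>
      (\<forall>i<k. vs ! i \<in> es ! i \<and> vs ! (Suc i mod k) \<in> es ! i))"

definition girth_greater :: "nat set set \<Rightarrow> nat \<Rightarrow> bool" where
  "girth_greater E N \<longleftrightarrow> (\<forall>k. has_cycle_of_length E k \<longrightarrow> k > N)"

datatype hs = Inf | HA | HAv nat | HCv nat

fun hmul :: "nat set set \<Rightarrow> hs \<Rightarrow> hs \<Rightarrow> hs" where
  "hmul E (HAv u) (HAv v) =
     (if \<exists>w. {u, v, w} \<in> E then HCv (THE w. {u, v, w} \<in> E) else Inf)"
| "hmul E (HAv u) (HCv v) = (if u = v then HA else Inf)"
| "hmul E (HCv u) (HAv v) = (if u = v then HA else Inf)"
| "hmul E _ _ = Inf"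

definition hval :: "nat set set \<Rightarrow> aiterm \<Rightarrow> hs" where
  "hval E t = tval Inf (hmul E) HAv t"

definition t_H :: "nat set set \<Rightarrow> aiterm" where
  "t_H E = {[a, b, c] | a b c. {a, b, c} \<in> E}"

definition non_hyperedge_term :: "nat set \<Rightarrow> nat set set \<Rightarrow> aiterm \<Rightarrow> bool" where
  "non_hyperedge_term V E w \<longleftrightarrow> is_term w \<and> (\<forall>u\<in>w. set u \<subseteq> V) \<and> hval E w \<noteq> HA"

end

(*
  If \<Sigma> had a finite basis \<Sigma>', take n larger than the number of variables of every
  identity in \<Sigma>'. Evaluating such an identity in S_H, for H of girth greater than
  3 (3n choose 2), involves few enough vertices that the hyperedges among them form a
  hyperforest, and rainbow 3-colourings of a hyperforest can be prescribed at any two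
  vertices. Reading the colours as the letters a, b, c, the map a_v |-> the letter of v,
  c_v |-> the other two letters, a |-> abc turns an evaluation in S_H into one in S_c(abc),
  and a suitably chosen colouring tells the two sides apart whenever they differ in S_H.
  So S_H satisfies \<Sigma>', hence \<Sigma>, hence t_H = t_H + w_n; but under x_v |-> a_v the left
  side is a while the right side is the zero, as w_n is a non-hyperedge term.
*)
theory Submission
  imports Defs
begin

section \<open>Terms and flat semirings\<close>

lemma finite_tprod: "finite s \<Longrightarrow> finite t \<Longrightarrow> finite (tprod s t)"
  unfolding tprod_def by (simp add: finite_image_set2)

lemma is_term_tprod:
  assumes "is_term s" and "is_term t"
  shows "is_term (tprod s t)"
proof -
  obtain p q where "p \<in> s" "q \<in> t" using assms unfolding is_term_def by blast
  then have "p @ q \<in> tprod s t" unfolding tprod_def by blast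
  moreover have "\<forall>w\<in>tprod s t. w \<noteq> []" using assms unfolding tprod_def is_term_def by force
  ultimately show ?thesis using assms finite_tprod unfolding is_term_def by blast
qed

lemma is_term_tsum: "is_term s \<Longrightarrow> is_term t \<Longrightarrow> is_term (tsum s t)"
  unfolding is_term_def tsum_def by auto

lemma is_term_wsubst: "(\<And>x. is_term (\<sigma> x)) \<Longrightarrow> p \<noteq> [] \<Longrightarrow> is_term (wsubst \<sigma> p)"
  by (induction \<sigma> p rule: wsubst.induct) (simp_all add: is_term_tprod)

lemma is_term_tsubst:
  assumes "\<And>x. is_term (\<sigma> x)" and "is_term u"
  shows "is_term (tsubst \<sigma> u)"
proof -
  have "\<And>p. p \<in> u \<Longrightarrow> p \<noteq> []" using assms(2) by (simp add: is_term_def)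
  then have "\<And>p. p \<in> u \<Longrightarrow> is_term (wsubst \<sigma> p)" using assms(1) by (simp add: is_term_wsubst)
  then show ?thesis using assms(2) unfolding is_term_def tsubst_def by auto
qed

lemma tval_eqI: "wval mul \<phi> ` t = {c} \<Longrightarrow> tval zr mul \<phi> t = c"
  unfolding tval_def by auto

lemma tval_eq_iff:
  assumes "t \<noteq> {}" and "c \<noteq> zr"
  shows "tval zr mul \<phi> t = c \<longleftrightarrow> (\<forall>p\<in>t. wval mul \<phi> p = c)"
proof
  assume "tval zr mul \<phi> t = c"
  then show "\<forall>p\<in>t. wval mul \<phi> p = c" using assms unfolding tval_def by (auto split: if_splits)
next
  assume "\<forall>p\<in>t. wval mul \<phi> p = c"
  then have "wval mul \<phi> ` t = {c}" using assms(1) by auto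
  then show "tval zr mul \<phi> t = c" by (rule tval_eqI)
qed


lemma image_eq_singleton_iff: "f ` A = {c} \<longleftrightarrow> A \<noteq> {} \<and> (\<forall>x\<in>A. f x = c)"
  by (auto simp: image_constant_conv cong: image_cong)

definition flat_sum :: "'a \<Rightarrow> 'a set \<Rightarrow> 'a" where
  "flat_sum zr A = (if \<exists>c. A = {c} then the_elem A else zr)"

lemma tval_flat_sum: "tval zr mul \<phi> t = flat_sum zr (wval mul \<phi> ` t)"
  unfolding tval_def flat_sum_def ..

lemma flat_sum_eq_iff: "A \<noteq> {} \<Longrightarrow> c \<noteq> zr \<Longrightarrow> flat_sum zr A = c \<longleftrightarrow> A = {c}"
  unfolding flat_sum_def by auto

lemma flat_sum_nonzero: "flat_sum zr A \<noteq> zr \<Longrightarrow> A = {flat_sum zr A}"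
  unfolding flat_sum_def by (auto split: if_splits)

lemma flat_sum_UN:
  assumes "I \<noteq> {}" and "\<And>i. i \<in> I \<Longrightarrow> A i \<noteq> {}"
  shows "flat_sum zr (\<Union>i\<in>I. A i) = flat_sum zr ((\<lambda>i. flat_sum zr (A i)) ` I)"
proof -
  have "flat_sum zr (\<Union>i\<in>I. A i) = c \<longleftrightarrow> flat_sum zr ((\<lambda>i. flat_sum zr (A i)) ` I) = c"
    if "c \<noteq> zr" for c
  proof -
    have "(\<Union>i\<in>I. A i) \<noteq> {}" using assms by blast
    then have "flat_sum zr (\<Union>i\<in>I. A i) = c \<longleftrightarrow> (\<Union>i\<in>I. A i) = {c}"
      using that by (rule flat_sum_eq_iff)
    also have "\<dots> \<longleftrightarrow> (\<forall>i\<in>I. A i = {c})"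
      using assms by (metis (no_types, lifting) SUP_bot_conv(2) SUP_eq_const UN_constant_eq UN_upper
          subset_singleton_iff)
    also have "\<dots> \<longleftrightarrow> (\<forall>i\<in>I. flat_sum zr (A i) = c)"
      using assms(2) that by (simp add: flat_sum_eq_iff)
    also have "\<dots> \<longleftrightarrow> flat_sum zr ((\<lambda>i. flat_sum zr (A i)) ` I) = c"
      using assms(1) that by (simp add: flat_sum_eq_iff image_eq_singleton_iff)
    finally show ?thesis .
  qed
  then show ?thesis by metis
qed

lemma flat_sum_Un:
  assumes "A \<noteq> {}" and "B \<noteq> {}"
  shows "flat_sum zr (A \<union> B) = (if flat_sum zr A = flat_sum zr B then flat_sum zr A else zr)"
proof -
  have "A \<union> B = (\<Union>X\<in>{A, B}. X)" by simp
  also have "flat_sum zr \<dots> = flat_sum zr (flat_sum zr ` {A, B})"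
    using assms by (intro flat_sum_UN) auto
  finally show ?thesis by (simp add: flat_sum_def)
qed

lemma tval_Un:
  assumes "s \<noteq> {}" and "t \<noteq> {}"
  shows "tval zr mul \<phi> (s \<union> t) =
    (if tval zr mul \<phi> s = tval zr mul \<phi> t then tval zr mul \<phi> s else zr)"
  using assms by (simp add: tval_flat_sum image_Un flat_sum_Un)

lemma derivable_is_term:
  assumes "identity_set \<Sigma>" and "derivable \<Sigma> u v"
  shows "is_term u \<and> is_term v"
  using assms(2)
  by induction (use assms(1) in \<open>auto simp: identity_set_def is_term_tsubst is_term_tsum is_term_tprod\<close>)

definition flat_satisfies :: "'a \<Rightarrow> ('a \<Rightarrow> 'a \<Rightarrow> 'a) \<Rightarrow> 'a set \<Rightarrow> aiterm \<Rightarrow> aiterm \<Rightarrow> bool" where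
  "flat_satisfies zr mul C u v \<longleftrightarrow>
     (\<forall>\<phi>. (\<forall>x. \<phi> x \<in> C) \<longrightarrow> tval zr mul \<phi> u = tval zr mul \<phi> v)"

text \<open>The flat extension of a semigroup with zero is an ai-semiring precisely when the
  multiplication is 0-cancellative; this is what makes flat sums distribute over products.\<close>

locale flat_semiring =
  fixes zr :: 'a and mul :: "'a \<Rightarrow> 'a \<Rightarrow> 'a" and C :: "'a set"
  assumes zero_closed: "zr \<in> C"
    and mul_closed: "a \<in> C \<Longrightarrow> b \<in> C \<Longrightarrow> mul a b \<in> C"
    and mul_assoc: "a \<in> C \<Longrightarrow> b \<in> C \<Longrightarrow> c \<in> C \<Longrightarrow> mul (mul a b) c = mul a (mul b c)"
    and mul_zero_left: "mul zr a = zr" and mul_zero_right: "mul a zr = zr"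
    and cancel_right: "a \<in> C \<Longrightarrow> a' \<in> C \<Longrightarrow> b \<in> C \<Longrightarrow> mul a b = mul a' b \<Longrightarrow> mul a b \<noteq> zr \<Longrightarrow> a = a'"
    and cancel_left: "a \<in> C \<Longrightarrow> a' \<in> C \<Longrightarrow> b \<in> C \<Longrightarrow> mul b a = mul b a' \<Longrightarrow> mul b a \<noteq> zr \<Longrightarrow> a = a'"
begin

lemma wval_closed: "(\<And>x. \<phi> x \<in> C) \<Longrightarrow> p \<noteq> [] \<Longrightarrow> wval mul \<phi> p \<in> C"
  by (induction p rule: induct_list012) (simp_all add: mul_closed)

lemma tval_closed:
  assumes "\<And>x. \<phi> x \<in> C" and "is_term t"
  shows "tval zr mul \<phi> t \<in> C"
proof (cases "\<exists>c. wval mul \<phi> ` t = {c}")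
  case True
  then obtain c where c: "wval mul \<phi> ` t = {c}" by blast
  then obtain p where "p \<in> t" "wval mul \<phi> p = c" by (metis imageE insertI1)
  then have "c \<in> C" using assms wval_closed unfolding is_term_def by blast
  then show ?thesis using c by (simp add: tval_eqI)
qed (simp add: tval_def zero_closed)

lemma wval_append:
  assumes "\<And>x. \<phi> x \<in> C" and "p \<noteq> []" and "q \<noteq> []"
  shows "wval mul \<phi> (p @ q) = mul (wval mul \<phi> p) (wval mul \<phi> q)"
  using assms(2)
proof (induction p rule: induct_list012)
  case (2 x)
  then show ?case using assms(3) by (cases q) simp_all
next
  case (3 x y zs)
  then show ?case using assms by (simp add: mul_assoc wval_closed)
qed simp

lemma constant_products:
  assumes "A \<subseteq> C" "B \<subseteq> C" "a \<in> A" "b \<in> B" "c \<noteq> zr"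
    and all_c: "\<And>a b. a \<in> A \<Longrightarrow> b \<in> B \<Longrightarrow> mul a b = c"
  shows "A = {a}" "B = {b}"
proof -
  have "a' = a" if "a' \<in> A" for a' using cancel_right[of a' a b] that assms by auto
  then show "A = {a}" using assms(3) by blast
  have "b' = b" if "b' \<in> B" for b' using cancel_left[of b' b a] that assms by auto
  then show "B = {b}" using assms(4) by blast
qed

lemma wval_tprod_image:
  assumes \<phi>: "\<And>x. \<phi> x \<in> C" and "is_term s" and "is_term t"
  shows "wval mul \<phi> ` tprod s t = (\<lambda>(a, b). mul a b) ` (wval mul \<phi> ` s \<times> wval mul \<phi> ` t)"
proof -
  have "tprod s t = (\<lambda>(p, q). p @ q) ` (s \<times> t)" unfolding tprod_def by auto
  then have "wval mul \<phi> ` tprod s t = (\<lambda>(p, q). wval mul \<phi> (p @ q)) ` (s \<times> t)"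
    by (simp add: image_comp case_prod_unfold)
  also have "\<dots> = (\<lambda>(p, q). mul (wval mul \<phi> p) (wval mul \<phi> q)) ` (s \<times> t)"
    using assms unfolding is_term_def by (intro image_cong) (auto simp: wval_append)
  also have "\<dots> = (\<lambda>(a, b). mul a b) ` (wval mul \<phi> ` s \<times> wval mul \<phi> ` t)"
    by (auto simp: image_iff)
  finally show ?thesis .
qed

lemma tval_tprod:
  assumes \<phi>: "\<And>x. \<phi> x \<in> C" and "is_term s" and "is_term t"
  shows "tval zr mul \<phi> (tprod s t) = mul (tval zr mul \<phi> s) (tval zr mul \<phi> t)"
proof -
  let ?S = "wval mul \<phi> ` s" and ?T = "wval mul \<phi> ` t"
  have ne: "s \<noteq> {}" "t \<noteq> {}" using assms unfolding is_term_def by blast+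
  have closed: "?S \<subseteq> C" "?T \<subseteq> C" using assms wval_closed[OF \<phi>] unfolding is_term_def by auto
  note image = wval_tprod_image[OF assms]
  show ?thesis
  proof (cases "tval zr mul \<phi> s \<noteq> zr \<and> tval zr mul \<phi> t \<noteq> zr")
    case True
    then have "?S = {tval zr mul \<phi> s}" "?T = {tval zr mul \<phi> t}"
      by (simp_all add: tval_flat_sum flat_sum_nonzero)
    then show ?thesis by (intro tval_eqI) (simp add: image)
  next
    case False
    then have "mul (tval zr mul \<phi> s) (tval zr mul \<phi> t) = zr"
      using mul_zero_left mul_zero_right by auto
    moreover have "tval zr mul \<phi> (tprod s t) = zr"
    proof (rule ccontr)
      define c where "c = tval zr mul \<phi> (tprod s t)"
      assume "tval zr mul \<phi> (tprod s t) \<noteq> zr"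
      then have nz: "c \<noteq> zr" unfolding c_def .
      then have "(\<lambda>(a, b). mul a b) ` (?S \<times> ?T) = {c}"
        unfolding c_def image[symmetric] by (simp add: tval_flat_sum flat_sum_nonzero)
      then have all_c: "\<And>a b. a \<in> ?S \<Longrightarrow> b \<in> ?T \<Longrightarrow> mul a b = c" by blast
      obtain a b where ab: "a \<in> ?S" "b \<in> ?T" using ne by blast
      then have "?S = {a}" "?T = {b}" using constant_products closed nz all_c by metis+
      moreover have "a \<noteq> zr" "b \<noteq> zr"
        using all_c[OF ab] nz mul_zero_left mul_zero_right by auto
      ultimately show False using False by (simp add: tval_eqI)
    qed
    ultimately show ?thesis by simp
  qed
qed

lemma tval_wsubst:
  assumes \<phi>: "\<And>x. \<phi> x \<in> C" and \<sigma>: "\<And>x. is_term (\<sigma> x)" and "p \<noteq> []"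
  shows "tval zr mul \<phi> (wsubst \<sigma> p) = wval mul (\<lambda>x. tval zr mul \<phi> (\<sigma> x)) p"
  using assms(3)
proof (induction p rule: induct_list012)
  case (3 x y zs)
  have "is_term (wsubst \<sigma> (y # zs))" using \<sigma> by (simp add: is_term_wsubst)
  then show ?case using 3 by (simp add: tval_tprod[OF \<phi> \<sigma>])
qed simp_all

lemma tval_tsubst:
  assumes \<phi>: "\<And>x. \<phi> x \<in> C" and \<sigma>: "\<And>x. is_term (\<sigma> x)" and u: "is_term u"
  shows "tval zr mul \<phi> (tsubst \<sigma> u) = tval zr mul (\<lambda>x. tval zr mul \<phi> (\<sigma> x)) u"
proof -
  have words: "u \<noteq> {}" "\<And>p. p \<in> u \<Longrightarrow> p \<noteq> []" using u unfolding is_term_def by auto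
  then have "\<And>p. p \<in> u \<Longrightarrow> wsubst \<sigma> p \<noteq> {}"
    using \<sigma> is_term_wsubst unfolding is_term_def by blast
  then have "tval zr mul \<phi> (tsubst \<sigma> u) = flat_sum zr ((\<lambda>p. tval zr mul \<phi> (wsubst \<sigma> p)) ` u)"
    unfolding tsubst_def tval_flat_sum image_UN using words(1) by (intro flat_sum_UN) auto
  also have "\<dots> = flat_sum zr (wval mul (\<lambda>x. tval zr mul \<phi> (\<sigma> x)) ` u)"
    using words(2) by (simp add: tval_wsubst[OF \<phi> \<sigma>] cong: image_cong)
  also have "\<dots> = tval zr mul (\<lambda>x. tval zr mul \<phi> (\<sigma> x)) u"
    by (simp only: tval_flat_sum)
  finally show ?thesis .
qed

lemma derivable_sound:
  assumes "identity_set \<Sigma>" and "\<forall>(u, v)\<in>\<Sigma>. flat_satisfies zr mul C u v"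
    and "derivable \<Sigma> u v"
  shows "flat_satisfies zr mul C u v"
  using assms(3)
proof (induction rule: derivable.induct)
  case (ax u v \<sigma>)
  then have "is_term u" "is_term v" "flat_satisfies zr mul C u v"
    using assms(1,2) unfolding identity_set_def by auto
  with ax.hyps(2) show ?case
    unfolding flat_satisfies_def by (simp add: tval_tsubst tval_closed)
next
  case (plus u v t)
  then have "u \<noteq> {}" "v \<noteq> {}" "t \<noteq> {}"
    using derivable_is_term[OF assms(1)] unfolding is_term_def by blast+
  with plus.IH show ?case
    unfolding flat_satisfies_def tsum_def by (simp add: tval_Un)
next
  case (mult_l u v t)
  then have "is_term u" "is_term v" using derivable_is_term[OF assms(1)] by blast+
  with mult_l show ?case
    unfolding flat_satisfies_def by (simp add: tval_tprod)
next
  case (mult_r u v t)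
  then have "is_term u" "is_term v" using derivable_is_term[OF assms(1)] by blast+
  with mult_r show ?case
    unfolding flat_satisfies_def by (simp add: tval_tprod)
qed (simp_all add: flat_satisfies_def)

end

section \<open>The flat semirings \<open>S\<^sub>c(abc)\<close> and \<open>S\<^sub>H\<close>\<close>

lemma Sc_mul_None_right [simp]: "Sc_mul a None = None"
  by (cases a) simp_all

lemma Sc_mul_eq_Some_iff:
  "Sc_mul a b = Some z \<longleftrightarrow> (\<exists>x y. a = Some x \<and> b = Some y \<and> x \<inter> y = {} \<and> z = x \<union> y)"
  by (cases a; cases b) auto

lemma Sc_mul_commute: "Sc_mul a b = Sc_mul b a"
  by (cases a; cases b) (auto simp: Int_commute Un_commute)

lemma Sc_mul_cancel:
  assumes "Sc_mul a b = Sc_mul a' b" and "Sc_mul a b \<noteq> None"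
  shows "a = a'"
proof -
  obtain z where "Sc_mul a b = Some z" "Sc_mul a' b = Some z" using assms by auto
  then obtain x x' y where "a = Some x" "a' = Some x'" "b = Some y"
    "x \<inter> y = {}" "x' \<inter> y = {}" "x \<union> y = x' \<union> y"
    unfolding Sc_mul_eq_Some_iff by auto
  then show ?thesis by blast
qed

lemma Sc_mul_assoc: "Sc_mul (Sc_mul a b) c = Sc_mul a (Sc_mul b c)"
  by (cases a; cases b; cases c) (simp_all add: Int_Un_distrib Int_Un_distrib2 Int_commute Un_assoc)

lemma Sc_carrier_iff: "None \<in> Sc_carrier" "Some s \<in> Sc_carrier \<longleftrightarrow> s \<noteq> {} \<and> s \<subseteq> {0, 1, 2}"
  unfolding Sc_carrier_def by auto

lemma Sc_flat_semiring: "flat_semiring None Sc_mul Sc_carrier"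
proof
  fix a b :: "nat set option"
  assume "a \<in> Sc_carrier" "b \<in> Sc_carrier"
  then show "Sc_mul a b \<in> Sc_carrier"
    by (cases a; cases b) (auto simp: Sc_carrier_iff)
next
  fix a a' b :: "nat set option"
  assume "Sc_mul b a = Sc_mul b a'" and "Sc_mul b a \<noteq> None"
  then show "a = a'" by (metis Sc_mul_cancel Sc_mul_commute)
qed (simp_all add: Sc_carrier_iff Sc_mul_assoc Sc_mul_cancel)

lemma Sc_satisfies_eq: "Sc_satisfies = flat_satisfies None Sc_mul Sc_carrier"
  by (simp add: fun_eq_iff Sc_satisfies_def flat_satisfies_def)

definition linear_3uniform :: "nat set set \<Rightarrow> bool" where
  "linear_3uniform E \<longleftrightarrow> (\<forall>e\<in>E. card e = 3) \<and>
     (\<forall>e1\<in>E. \<forall>e2\<in>E. \<forall>a b. a \<noteq> b \<longrightarrow> a \<in> e1 \<longrightarrow> b \<in> e1 \<longrightarrow> a \<in> e2 \<longrightarrow> b \<in> e2 \<longrightarrow> e1 = e2)"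

lemma card_edge: "linear_3uniform E \<Longrightarrow> e \<in> E \<Longrightarrow> card e = 3"
  unfolding linear_3uniform_def by blast

lemma edge_eqI:
  "linear_3uniform E \<Longrightarrow> e1 \<in> E \<Longrightarrow> e2 \<in> E \<Longrightarrow> a \<noteq> b \<Longrightarrow> a \<in> e1 \<Longrightarrow> b \<in> e1 \<Longrightarrow> a \<in> e2 \<Longrightarrow> b \<in> e2
   \<Longrightarrow> e1 = e2"
  unfolding linear_3uniform_def by blast

lemma edge_distinct:
  assumes "linear_3uniform E" and "{a, b, c} \<in> E"
  shows "a \<noteq> b" "a \<noteq> c" "b \<noteq> c"
  using card_edge[OF assms] by (auto simp: card_insert_if split: if_splits)

lemma edge_third_unique:
  assumes L: "linear_3uniform E" and "{u, v, w} \<in> E" and "{u, v, w'} \<in> E"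
  shows "w = w'"
proof -
  have "{u, v, w} = {u, v, w'}" using edge_eqI[OF L assms(2,3)] edge_distinct[OF L assms(2)] by blast
  then have "w \<in> {u, v, w'}" by blast
  then show ?thesis using edge_distinct[OF L assms(2)] by blast
qed

lemma hmul_HAv_eq_HCv_iff:
  assumes L: "linear_3uniform E"
  shows "hmul E (HAv u) (HAv v) = HCv w \<longleftrightarrow> {u, v, w} \<in> E"
proof -
  have "(THE w. {u, v, w} \<in> E) = w'" if "{u, v, w'} \<in> E" for w'
    using that by (blast intro: edge_third_unique[OF L])
  then show ?thesis by auto
qed

lemma hmul_HAv_HAv_cases:
  "hmul E (HAv u) (HAv v) = Inf \<or> (\<exists>w. hmul E (HAv u) (HAv v) = HCv w)"
  by simp

lemma hmul_neq_HAv: "hmul E a b \<noteq> HAv t"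
  by (cases a; cases b) simp_all

lemma hmul_commute: "hmul E a b = hmul E b a"
proof -
  have "{u, v, w} = {v, u, w}" for u v w :: nat by blast
  then show ?thesis by (cases a; cases b) simp_all
qed

lemma hmul_HAv_HAv_eq_HCv:
  "linear_3uniform E \<Longrightarrow> {u, v, w} \<in> E \<Longrightarrow> hmul E (HAv u) (HAv v) = HCv w"
  using hmul_HAv_eq_HCv_iff by blast

lemma hmul_hyperedge:
  assumes L: "linear_3uniform E"
  shows "hmul E (hmul E (HAv u) (HAv v)) (HAv w) = (if {u, v, w} \<in> E then HA else Inf)"
proof (cases "{u, v, w} \<in> E")
  case True
  then show ?thesis by (simp only: hmul_HAv_HAv_eq_HCv[OF L True]) simp
next
  case False
  then have "hmul E (HAv u) (HAv v) \<noteq> HCv w" using hmul_HAv_eq_HCv_iff[OF L] by blast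
  then consider "hmul E (HAv u) (HAv v) = Inf" | w' where "hmul E (HAv u) (HAv v) = HCv w'" "w' \<noteq> w"
    using hmul_HAv_HAv_cases[of E u v] by blast
  then show ?thesis
  proof cases
    case 1
    show ?thesis unfolding 1 using False by simp
  next
    case 2
    show ?thesis unfolding 2(1) using False 2(2) by simp
  qed
qed

lemma hmul_assoc:
  assumes L: "linear_3uniform E"
  shows "hmul E (hmul E a b) c = hmul E a (hmul E b c)"
proof (cases "\<exists>u v w. a = HAv u \<and> b = HAv v \<and> c = HAv w")
  case True
  then obtain u v w where abc: "a = HAv u" "b = HAv v" "c = HAv w" by blast
  have "{v, w, u} = {u, v, w}" by blast
  then show ?thesis
    using hmul_hyperedge[OF L, of u v w] hmul_hyperedge[OF L, of v w u]
    by (simp add: abc hmul_commute[of E "HAv u"])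
next
  case False
  then show ?thesis by (cases a; cases b; cases c) (simp_all split: if_split)
qed

lemma hmul_nonzero_cases:
  assumes L: "linear_3uniform E" and "hmul E a b \<noteq> Inf"
  obtains (edge) u v w where "a = HAv u" "b = HAv v" "{u, v, w} \<in> E" "hmul E a b = HCv w"
    | (left) u where "a = HAv u" "b = HCv u" "hmul E a b = HA"
    | (right) u where "a = HCv u" "b = HAv u" "hmul E a b = HA"
proof (cases a; cases b)
  fix u v assume "a = HAv u" "b = HAv v"
  then show thesis
    using edge assms hmul_HAv_HAv_cases[of E u v] hmul_HAv_eq_HCv_iff[OF L] by metis
qed (use assms that in \<open>simp_all split: if_splits\<close>)

lemma hmul_cancel_right:
  assumes L: "linear_3uniform E" and eq: "hmul E a b = hmul E a' b" and nz: "hmul E a b \<noteq> Inf"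
  shows "a = a'"
proof -
  have nz': "hmul E a' b \<noteq> Inf" using eq nz by simp
  from L nz show ?thesis
  proof (cases rule: hmul_nonzero_cases)
    case (edge u v w)
    from L nz' show ?thesis
    proof (cases rule: hmul_nonzero_cases)
      case (edge u' v' w')
      then have "{v, w, u} \<in> E" "{v, w, u'} \<in> E"
        using \<open>{u, v, w} \<in> E\<close> eq \<open>b = HAv v\<close> \<open>hmul E a b = HCv w\<close> by (simp_all add: insert_commute)
      then show ?thesis using edge_third_unique[OF L] \<open>a = HAv u\<close> \<open>a' = HAv u'\<close> by blast
    qed (use edge eq in simp_all)
  next
    case (left u)
    from L nz' show ?thesis by (cases rule: hmul_nonzero_cases) (use left eq in simp_all)
  next
    case (right u)
    from L nz' show ?thesis by (cases rule: hmul_nonzero_cases) (use right eq in simp_all)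
  qed
qed

lemma SH_flat_semiring:
  assumes L: "linear_3uniform E"
  shows "flat_semiring Inf (hmul E) UNIV"
proof
  fix a a' b :: hs
  assume "hmul E b a = hmul E b a'" and "hmul E b a \<noteq> Inf"
  then show "a = a'" using hmul_cancel_right[OF L] hmul_commute by metis
next
  fix a :: hs
  show "hmul E a Inf = Inf" by (cases a) simp_all
qed (simp_all add: hmul_assoc[OF L] hmul_cancel_right[OF L])

section \<open>Connectivity and cycles in hypergraphs\<close>

definition connected_in :: "nat set set \<Rightarrow> nat \<Rightarrow> nat \<Rightarrow> bool" where
  "connected_in F a b \<longleftrightarrow> (a, b) \<in> {(a, b). \<exists>f\<in>F. a \<in> f \<and> b \<in> f}\<^sup>*"

lemma connected_in_refl [simp]: "connected_in F a a"
  unfolding connected_in_def by simp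

lemma connected_in_trans: "connected_in F a b \<Longrightarrow> connected_in F b c \<Longrightarrow> connected_in F a c"
  unfolding connected_in_def by (rule rtrancl_trans)

lemma connected_in_sym: "connected_in F a b \<Longrightarrow> connected_in F b a"
proof -
  have "sym {(a, b). \<exists>f\<in>F. a \<in> f \<and> b \<in> f}" unfolding sym_def by blast
  then show "connected_in F a b \<Longrightarrow> connected_in F b a"
    unfolding connected_in_def by (meson sym_rtrancl symD)
qed

lemma connected_in_edge: "f \<in> F \<Longrightarrow> a \<in> f \<Longrightarrow> b \<in> f \<Longrightarrow> connected_in F a b"
  unfolding connected_in_def by (rule r_into_rtrancl) blast

lemma connected_in_cong: "connected_in F a b \<Longrightarrow> connected_in F t a \<longleftrightarrow> connected_in F t b"
  using connected_in_trans connected_in_sym by blast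

fun berge_path :: "nat set set \<Rightarrow> nat list \<Rightarrow> nat set list \<Rightarrow> bool" where
  "berge_path F [] es = False"
| "berge_path F [v] es = (es = [])"
| "berge_path F (v # v' # vs) es = (case es of [] \<Rightarrow> False
     | e # es' \<Rightarrow> e \<in> F \<and> v \<in> e \<and> v' \<in> e \<and> berge_path F (v' # vs) es')"

lemma berge_path_length: "berge_path F vs es \<Longrightarrow> length vs = Suc (length es)"
  by (induction F vs es rule: berge_path.induct) (auto split: list.splits)

lemma berge_path_nth:
  "berge_path F vs es \<Longrightarrow> i < length es \<Longrightarrow> es ! i \<in> F \<and> vs ! i \<in> es ! i \<and> vs ! Suc i \<in> es ! i"
proof (induction F vs es arbitrary: i rule: berge_path.induct)
  case (3 F v v' vs es)
  then show ?case by (cases es; cases i) (auto split: list.splits)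
qed auto

lemma berge_path_drop:
  "berge_path F vs es \<Longrightarrow> j < length vs \<Longrightarrow> berge_path F (drop j vs) (drop j es)"
proof (induction F vs es arbitrary: j rule: berge_path.induct)
  case (3 F v v' vs es)
  then show ?case by (cases es; cases j) auto
qed auto

lemma berge_path_reroute:
  assumes p: "berge_path F vs es" "distinct vs" "distinct es"
    and "a \<notin> set vs" "a \<in> f" and j: "j < length es" "es ! j = f"
  shows "berge_path F (a # drop (Suc j) vs) (f # drop (Suc j) es) \<and> last (a # drop (Suc j) vs) = last vs
    \<and> distinct (a # drop (Suc j) vs) \<and> distinct (f # drop (Suc j) es)"
proof -
  have sj: "Suc j < length vs" using j berge_path_length[OF p(1)] by simp
  have dr: "drop (Suc j) vs = vs ! Suc j # drop (Suc (Suc j)) vs"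
    using sj by (simp add: Cons_nth_drop_Suc)
  have "berge_path F (vs ! Suc j # drop (Suc (Suc j)) vs) (drop (Suc j) es)"
    using berge_path_drop[OF p(1) sj] dr by simp
  moreover have "f \<in> F" "vs ! Suc j \<in> f" using berge_path_nth[OF p(1) j(1)] j by simp_all
  ultimately have "berge_path F (a # drop (Suc j) vs) (f # drop (Suc j) es)"
    using assms(5) dr by simp
  moreover have "last (a # drop (Suc j) vs) = last vs" using sj dr by (metis last_ConsR last_drop list.simps(3))
  moreover have "distinct (a # drop (Suc j) vs)" using assms(4) p(2) set_drop_subset[of "Suc j" vs] by auto
  moreover have "distinct (f # drop (Suc j) es)"
    using p(3) j by (metis Cons_nth_drop_Suc distinct.simps(2) distinct_drop)
  ultimately show ?thesis by blast
qed

lemma connected_in_berge_path: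
  assumes "connected_in F a b"
  shows "\<exists>vs es. berge_path F vs es \<and> hd vs = a \<and> last vs = b \<and> distinct vs \<and> distinct es"
  using assms unfolding connected_in_def
proof (induction rule: converse_rtrancl_induct)
  case base
  show ?case by (rule exI[of _ "[b]"], rule exI[of _ "[]"]) simp
next
  case (step a a')
  obtain vs es where p: "berge_path F vs es" "hd vs = a'" "last vs = b" "distinct vs" "distinct es"
    using step.IH by blast
  obtain f where f: "f \<in> F" "a \<in> f" "a' \<in> f" using step.hyps(1) by blast
  consider (on_path) "a \<in> set vs" | (reroute) "a \<notin> set vs" "f \<in> set es"
    | (extend) "a \<notin> set vs" "f \<notin> set es" by blast
  then show ?case
  proof cases
    case on_path
    then obtain j where j: "j < length vs" "vs ! j = a" by (metis in_set_conv_nth)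
    then have "berge_path F (drop j vs) (drop j es)" "hd (drop j vs) = a" "last (drop j vs) = b"
      using berge_path_drop[OF p(1)] p(3) by (simp_all add: hd_drop_conv_nth)
    then show ?thesis using p(4,5) by (metis distinct_drop)
  next
    case reroute
    then obtain j where "j < length es" "es ! j = f" by (metis in_set_conv_nth)
    then show ?thesis using berge_path_reroute[OF p(1,4,5) reroute(1) f(2)] p(3) by (metis list.sel(1))
  next
    case extend
    obtain vs' where vs: "vs = a' # vs'" using p(2) berge_path_length[OF p(1)] by (cases vs) auto
    have "berge_path F (a # vs) (f # es)" using p(1) f vs by simp
    then show ?thesis using p extend vs by (metis distinct.simps(2) last_ConsR list.discI list.sel(1))
  qed
qed

lemma berge_path_close_cycle:
  assumes p: "berge_path F vs es" and "distinct vs" and "distinct es" and "e \<notin> F"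
    and "hd vs \<in> e" and "last vs \<in> e" and "hd vs \<noteq> last vs"
  shows "has_cycle_of_length (insert e F) (length vs)"
proof -
  let ?k = "length vs"
  have len: "?k = Suc (length es)" using berge_path_length[OF p] .
  have k2: "?k \<ge> 2" using len assms(7) by (cases es) (auto simp: length_Suc_conv)
  have "set es \<subseteq> F" using berge_path_nth[OF p] by (metis in_set_conv_nth subsetI)
  then have "distinct (es @ [e])" "set (es @ [e]) \<subseteq> insert e F" using assms(3,4) by auto
  moreover have "vs ! i \<in> (es @ [e]) ! i \<and> vs ! (Suc i mod ?k) \<in> (es @ [e]) ! i" if "i < ?k" for i
  proof (cases "i < length es")
    case True
    then show ?thesis using berge_path_nth[OF p True] len by (simp add: nth_append)
  next
    case False
    then have i: "i = length es" using that len by simp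
    have "vs \<noteq> []" using len by auto
    then have "vs ! i = last vs" "vs ! 0 = hd vs" using i len by (simp_all add: last_conv_nth hd_conv_nth)
    then show ?thesis using assms(5,6) i len by simp
  qed
  ultimately show ?thesis
    unfolding has_cycle_of_length_def using k2 len assms(2)
    by (intro exI[of _ vs] exI[of _ "es @ [e]"]) simp
qed

definition cycle_free :: "nat set set \<Rightarrow> bool" where
  "cycle_free F \<longleftrightarrow> (\<forall>k. \<not> has_cycle_of_length F k)"

lemma has_cycle_of_length_mono: "has_cycle_of_length F k \<Longrightarrow> F \<subseteq> G \<Longrightarrow> has_cycle_of_length G k"
  unfolding has_cycle_of_length_def by blast

lemma cycle_free_subset: "cycle_free G \<Longrightarrow> F \<subseteq> G \<Longrightarrow> cycle_free F"
  unfolding cycle_free_def using has_cycle_of_length_mono by blast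

lemma cycle_free_insert_not_connected:
  assumes "cycle_free (insert e F)" and "e \<notin> F" and "a \<in> e" "b \<in> e" "a \<noteq> b"
  shows "\<not> connected_in F a b"
proof
  assume "connected_in F a b"
  then obtain vs es where "berge_path F vs es" "hd vs = a" "last vs = b" "distinct vs" "distinct es"
    using connected_in_berge_path by blast
  then have "has_cycle_of_length (insert e F) (length vs)"
    using berge_path_close_cycle assms(2-5) by blast
  then show False using assms(1) unfolding cycle_free_def by blast
qed

section \<open>Rainbow colourings of hyperforests\<close>

definition rainbow :: "nat set set \<Rightarrow> (nat \<Rightarrow> nat) \<Rightarrow> bool" where
  "rainbow F col \<longleftrightarrow> (\<forall>v. col v < 3) \<and> (\<forall>f\<in>F. inj_on col f)"

definition adjacent_in :: "nat set set \<Rightarrow> nat \<Rightarrow> nat \<Rightarrow> bool" where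
  "adjacent_in F a b \<longleftrightarrow> a \<noteq> b \<and> (\<exists>f\<in>F. a \<in> f \<and> b \<in> f)"

definition admissible :: "nat set set \<Rightarrow> nat \<Rightarrow> nat \<Rightarrow> nat \<Rightarrow> nat \<Rightarrow> bool" where
  "admissible F r w c c' \<longleftrightarrow> c < 3 \<and> c' < 3 \<and> (r = w \<longrightarrow> c = c') \<and> (adjacent_in F r w \<longrightarrow> c \<noteq> c')"

definition two_point_colourable :: "nat set set \<Rightarrow> bool" where
  "two_point_colourable F \<longleftrightarrow>
     (\<forall>r w c c'. admissible F r w c c' \<longrightarrow> (\<exists>col. rainbow F col \<and> col r = c \<and> col w = c'))"

lemma two_point_colourableD:
  "two_point_colourable F \<Longrightarrow> admissible F r w c c' \<Longrightarrow> \<exists>col. rainbow F col \<and> col r = c \<and> col w = c'"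
  unfolding two_point_colourable_def by blast

lemma admissible_insert: "admissible (insert e F) r w c c' \<Longrightarrow> admissible F r w c c'"
  unfolding admissible_def adjacent_in_def by blast

lemma admissible_refl: "c < 3 \<Longrightarrow> admissible F v v c c"
  unfolding admissible_def adjacent_in_def by simp

lemma adjacent_in_connected_in: "adjacent_in F a b \<Longrightarrow> connected_in F a b"
  unfolding adjacent_in_def using connected_in_edge by blast

definition fresh_colour :: "nat \<Rightarrow> nat \<Rightarrow> nat" where
  "fresh_colour a b = (if 0 \<noteq> a \<and> 0 \<noteq> b then 0 else if 1 \<noteq> a \<and> 1 \<noteq> b then 1 else 2)"

lemma fresh_colour [simp]:
  "fresh_colour a b \<noteq> a" "fresh_colour a b \<noteq> b" "a \<noteq> fresh_colour a b" "b \<noteq> fresh_colour a b"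
  "fresh_colour a b < 3"
  unfolding fresh_colour_def by auto

lemma rainbow_componentwise:
  assumes rb: "\<And>v. rainbow F (sel v)" and const: "\<And>a b. connected_in F a b \<Longrightarrow> sel a = sel b"
  shows "rainbow F (\<lambda>v. sel v v)"
  unfolding rainbow_def
proof (intro conjI allI ballI inj_onI)
  show "sel v v < 3" for v using rb unfolding rainbow_def by blast
next
  fix f x y assume "f \<in> F" "x \<in> f" "y \<in> f" "sel x x = sel y y"
  moreover from this have "sel x = sel y" using const connected_in_edge by blast
  ultimately show "x = y" using rb unfolding rainbow_def by (metis inj_onD)
qed

lemma rainbow_insert_glue:
  assumes e: "e = {x, y, z}"
    and nc: "\<not> connected_in F x y" "\<not> connected_in F x z" "\<not> connected_in F y z"
    and rb: "rainbow F cx" "rainbow F cy" "rainbow F cz" "rainbow F c0"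
    and distinct: "cx x \<noteq> cy y" "cx x \<noteq> cz z" "cy y \<noteq> cz z"
  shows "rainbow (insert e F) (\<lambda>v. if connected_in F x v then cx v else if connected_in F y v then cy v
    else if connected_in F z v then cz v else c0 v)" (is "rainbow _ ?col")
proof -
  define sel where "sel v = (if connected_in F x v then cx else if connected_in F y v then cy
    else if connected_in F z v then cz else c0)" for v
  have "?col = (\<lambda>v. sel v v)" unfolding sel_def by auto
  moreover have "rainbow F (\<lambda>v. sel v v)"
  proof (rule rainbow_componentwise[of F sel])
    show "rainbow F (sel v)" for v unfolding sel_def using rb by simp
    show "sel a = sel b" if "connected_in F a b" for a b
      unfolding sel_def using connected_in_cong[OF that] by presburger
  qed
  ultimately have "rainbow F ?col" by simp
  moreover have "?col x = cx x" "?col y = cy y" "?col z = cz z"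
    using nc connected_in_sym by auto
  then have "inj_on ?col e" using e distinct by auto
  ultimately show ?thesis unfolding rainbow_def by blast
qed

lemma two_point_colourable_empty: "two_point_colourable {}"
  unfolding two_point_colourable_def
proof (intro allI impI)
  fix r w c c' assume "admissible {} r w c c'"
  then have "rainbow {} (\<lambda>v. if v = r then c else c')" "(\<lambda>v. if v = r then c else c') w = c'"
    unfolding admissible_def rainbow_def by auto
  then show "\<exists>col. rainbow {} col \<and> col r = c \<and> col w = c'" by force
qed

lemma two_point_colourable_insert_connected:
  assumes P: "two_point_colourable F" and e: "e = {x, y, z}"
    and nc: "\<not> connected_in F x y" "\<not> connected_in F x z" "\<not> connected_in F y z"
    and adm: "admissible (insert e F) r w c c'" and "connected_in F r w"
    and far: "\<not> connected_in F r y" "\<not> connected_in F r z"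
  shows "\<exists>col. rainbow (insert e F) col \<and> col r = c \<and> col w = c'"
proof -
  \<comment> \<open>keep a colouring of \<open>F\<close> fitting \<open>r, w\<close>, recolour the components of \<open>y\<close> and \<open>z\<close>\<close>
  obtain c0 where c0: "rainbow F c0" "c0 r = c" "c0 w = c'"
    using two_point_colourableD[OF P admissible_insert[OF adm]] by blast
  define dy where "dy = fresh_colour (c0 x) (c0 x)"
  define dz where "dz = fresh_colour (c0 x) dy"
  have "dy < 3" "dz < 3" by (simp_all add: dy_def dz_def)
  then obtain cy cz where cy: "rainbow F cy" "cy y = dy" and cz: "rainbow F cz" "cz z = dz"
    using two_point_colourableD[OF P admissible_refl] by metis
  have "rainbow (insert e F) (\<lambda>v. if connected_in F x v then c0 v else if connected_in F y v then cy v
      else if connected_in F z v then cz v else c0 v)"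
    by (rule rainbow_insert_glue[OF e nc c0(1) cy(1) cz(1) c0(1)])
      (simp_all add: cy(2) cz(2) dy_def dz_def)
  moreover have "\<not> connected_in F y r" "\<not> connected_in F z r" "\<not> connected_in F y w" "\<not> connected_in F z w"
    using far \<open>connected_in F r w\<close> connected_in_sym connected_in_trans by blast+
  ultimately show ?thesis using c0 by (intro exI) auto
qed

lemma two_point_colourable_insert_separated:
  assumes P: "two_point_colourable F" and e: "e = {x, y, z}"
    and nc: "\<not> connected_in F x y" "\<not> connected_in F x z" "\<not> connected_in F y z"
    and adm: "admissible (insert e F) r w c c'" and "\<not> connected_in F r w"
    and far: "\<not> connected_in F r y" "\<not> connected_in F r z" "\<not> connected_in F w x" "\<not> connected_in F w z"
  shows "\<exists>col. rainbow (insert e F) col \<and> col r = c \<and> col w = c'"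
proof -
  \<comment> \<open>colour the components of \<open>x\<close>, \<open>y\<close>, \<open>z\<close> separately, fitting \<open>r\<close> into that of \<open>x\<close> and \<open>w\<close> into that of \<open>y\<close>\<close>
  define dx where "dx = (if r = x then c else if w = y then fresh_colour c c' else fresh_colour c c)"
  define dy where "dy = (if w = y then c' else fresh_colour c' dx)"
  define dz where "dz = fresh_colour dx dy"
  have c: "c < 3" "c' < 3" using adm unfolding admissible_def by auto
  have "x \<noteq> y" using nc(1) by auto
  then have "r = x \<Longrightarrow> w = y \<Longrightarrow> c \<noteq> c'"
    using adm e unfolding admissible_def adjacent_in_def by auto
  then have d: "dx \<noteq> dy" "dx \<noteq> dz" "dy \<noteq> dz"
    unfolding dz_def by (auto simp: dx_def dy_def)
  have "admissible F r x c dx" "admissible F w y c' dy"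
    unfolding admissible_def dx_def dy_def using c by (simp_all add: adjacent_in_def)
  then obtain cx cy where cx: "rainbow F cx" "cx r = c" "cx x = dx" and cy: "rainbow F cy" "cy w = c'" "cy y = dy"
    using two_point_colourableD[OF P] by metis
  have "dz < 3" by (simp add: dz_def)
  then obtain cz where cz: "rainbow F cz" "cz z = dz"
    using two_point_colourableD[OF P admissible_refl] by blast
  have "admissible F r w c c'"
    using admissible_insert[OF adm] \<open>\<not> connected_in F r w\<close> adjacent_in_connected_in
    unfolding admissible_def by blast
  then obtain c0 where c0: "rainbow F c0" "c0 r = c" "c0 w = c'"
    using two_point_colourableD[OF P] by blast
  have "rainbow (insert e F) (\<lambda>v. if connected_in F x v then cx v else if connected_in F y v then cy v
      else if connected_in F z v then cz v else c0 v)"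
    by (rule rainbow_insert_glue[OF e nc cx(1) cy(1) cz(1) c0(1)]) (simp_all add: cx cy cz d)
  moreover have "\<not> connected_in F y r" "\<not> connected_in F z r" "\<not> connected_in F x w" "\<not> connected_in F z w"
    using far connected_in_sym by blast+
  ultimately show ?thesis using cx cy c0 by (intro exI) auto
qed

lemma edge_labelling_swap:
  assumes e: "e = {x, y, z}" and "y \<noteq> z"
    and disc: "\<And>a b. a \<in> e \<Longrightarrow> b \<in> e \<Longrightarrow> a \<noteq> b \<Longrightarrow> \<not> connected_in F a b"
    and r: "\<not> connected_in F r y" "\<not> connected_in F r z" "\<not> connected_in F r w \<Longrightarrow> \<not> connected_in F w x"
  obtains x' y' z' where "e = {x', y', z'}" "\<not> connected_in F r y'" "\<not> connected_in F r z'"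
    "\<not> connected_in F r w \<Longrightarrow> \<not> connected_in F w x' \<and> \<not> connected_in F w z'"
proof (cases "\<not> connected_in F r w \<and> connected_in F w z")
  case True
  then have "\<not> connected_in F w y"
    using disc[of y z] e \<open>y \<noteq> z\<close> connected_in_sym connected_in_trans by blast
  then show thesis using that[of x z y] e r True by (auto simp: insert_commute)
next
  case False
  then show thesis using that[of x y z] e r by blast
qed

lemma edge_labelling:
  assumes "card e = 3" and disc: "\<And>a b. a \<in> e \<Longrightarrow> b \<in> e \<Longrightarrow> a \<noteq> b \<Longrightarrow> \<not> connected_in F a b"
  obtains x y z where "e = {x, y, z}" "\<not> connected_in F r y" "\<not> connected_in F r z"
    "\<not> connected_in F r w \<Longrightarrow> \<not> connected_in F w x \<and> \<not> connected_in F w z"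
proof -
  note label = edge_labelling_swap[OF _ _ disc, where r=r and w=w]
  obtain x0 y0 z0 where e: "e = {x0, y0, z0}" "e = {y0, x0, z0}" "e = {z0, x0, y0}"
    and d: "x0 \<noteq> y0" "x0 \<noteq> z0" "y0 \<noteq> z0"
    using assms(1) by (auto simp: card_3_iff)
  have apart: "\<not> connected_in F t b" if "connected_in F t a" "a \<in> e" "b \<in> e" "a \<noteq> b" for t a b
    using that disc connected_in_sym connected_in_trans by metis
  have r_w: "\<not> connected_in F w a" if "connected_in F r a" "\<not> connected_in F r w" for a
    using that connected_in_sym connected_in_trans by metis
  consider "connected_in F r x0" | "connected_in F r y0" | "connected_in F r z0"
    | "\<not> connected_in F r x0" "\<not> connected_in F r y0" "\<not> connected_in F r z0" by blast
  then show thesis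
  proof cases
    case 1
    show thesis by (rule label[OF e(1)]) (use d e apart[OF 1] r_w[OF 1] that in simp_all)
  next
    case 2
    show thesis by (rule label[OF e(2)]) (use d e apart[OF 2] r_w[OF 2] that in simp_all)
  next
    case 3
    show thesis by (rule label[OF e(3)]) (use d e apart[OF 3] r_w[OF 3] that in simp_all)
  next
    case 4
    show thesis
    proof (cases "connected_in F w x0")
      case True
      show thesis by (rule label[OF e(2)]) (use d e 4 apart[OF True] that in simp_all)
    next
      case False
      show thesis by (rule label[OF e(1)]) (use d 4 False that in simp_all)
    qed
  qed
qed

lemma cycle_free_two_point_colourable:
  assumes "finite F" and "cycle_free F" and "\<forall>f\<in>F. card f = 3"
  shows "two_point_colourable F"
  using assms
proof (induction F rule: finite_induct)
  case empty
  show ?case by (rule two_point_colourable_empty)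
next
  case (insert e F)
  have P: "two_point_colourable F"
    using insert cycle_free_subset[OF insert.prems(1)] by blast
  have card: "card e = 3" using insert.prems(2) by blast
  have disc: "\<not> connected_in F a b" if "a \<in> e" "b \<in> e" "a \<noteq> b" for a b
    using cycle_free_insert_not_connected[OF insert.prems(1) insert.hyps(2) that] .
  show ?case unfolding two_point_colourable_def
  proof (intro allI impI)
    fix r w c c' assume adm: "admissible (insert e F) r w c c'"
    obtain x y z where lab: "e = {x, y, z}" "\<not> connected_in F r y" "\<not> connected_in F r z"
      "\<not> connected_in F r w \<Longrightarrow> \<not> connected_in F w x \<and> \<not> connected_in F w z"
      using edge_labelling[OF card disc] by blast
    have "x \<noteq> y" "x \<noteq> z" "y \<noteq> z" using card lab(1) by (auto simp: card_insert_if split: if_splits)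
    then have "\<not> connected_in F x y" "\<not> connected_in F x z" "\<not> connected_in F y z"
      using disc lab(1) by auto
    then show "\<exists>col. rainbow (insert e F) col \<and> col r = c \<and> col w = c'"
      using two_point_colourable_insert_connected[OF P lab(1) _ _ _ adm _ lab(2,3)]
        two_point_colourable_insert_separated[OF P lab(1) _ _ _ adm _ lab(2,3)] lab(4)
      by blast
  qed
qed

section \<open>Encoding \<open>S\<^sub>H\<close> into \<open>S\<^sub>c(abc)\<close>\<close>

lemma Sc_wval_length_le:
  assumes "\<And>z. z \<in> set p \<Longrightarrow> \<phi> z \<in> Sc_carrier" and "p \<noteq> []" and "wval Sc_mul \<phi> p = Some S"
  shows "length p \<le> card S \<and> S \<noteq> {} \<and> S \<subseteq> {0, 1, 2}"
  using assms
proof (induction p arbitrary: S rule: induct_list012)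
  case (2 z)
  then have "S \<noteq> {}" "S \<subseteq> {0, 1, 2}" by (auto simp: Sc_carrier_iff)
  then show ?case using finite_subset[of S "{0, 1, 2}"] by (auto simp: Suc_leI card_gt_0_iff)
next
  case (3 z1 z2 zs)
  then obtain A B where AB: "\<phi> z1 = Some A" "wval Sc_mul \<phi> (z2 # zs) = Some B" "A \<inter> B = {}" "S = A \<union> B"
    by (auto simp: Sc_mul_eq_Some_iff)
  then have B: "length (z2 # zs) \<le> card B" "B \<noteq> {}" "B \<subseteq> {0, 1, 2}" using 3 by auto
  have A: "A \<noteq> {}" "A \<subseteq> {0, 1, 2}" using 3(3)[of z1] AB(1) by (auto simp: Sc_carrier_iff)
  have "finite A" "finite B" using A(2) B(3) finite_subset by auto
  then have "card S = card A + card B" "card A \<ge> 1"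
    using A AB(3,4) by (simp_all add: card_Un_disjoint Suc_leI card_gt_0_iff)
  then show ?case using A B AB(4) by simp
qed simp

text \<open>The encoding of \<open>S\<^sub>H\<close> into \<open>S\<^sub>c(abc)\<close> along a colouring with colours \<open>0, 1, 2\<close> standing for
  the letters \<open>a, b, c\<close>: \<open>a\<^sub>v\<close> becomes the letter of its colour, \<open>c\<^sub>v\<close> the product of the other two,
  and \<open>a\<close> becomes \<open>abc\<close>.\<close>

fun enc :: "(nat \<Rightarrow> nat) \<Rightarrow> hs \<Rightarrow> nat set option" where
  "enc col Inf = None"
| "enc col HA = Some {0, 1, 2}"
| "enc col (HAv r) = Some {col r}"
| "enc col (HCv r) = Some ({0, 1, 2} - {col r})"

fun weight :: "hs \<Rightarrow> nat" where
  "weight Inf = 0" | "weight HA = 3" | "weight (HAv r) = 1" | "weight (HCv r) = 2"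

fun hs_vertices :: "hs \<Rightarrow> nat set" where
  "hs_vertices (HAv r) = {r}" | "hs_vertices (HCv r) = {r}" | "hs_vertices _ = {}"

lemma less_3_iff: "(c :: nat) < 3 \<longleftrightarrow> c = 0 \<or> c = 1 \<or> c = 2"
  by arith

lemma enc_in_Sc_carrier: "(\<And>v. col v < 3) \<Longrightarrow> enc col h \<in> Sc_carrier"
  by (cases h) (auto simp: Sc_carrier_iff less_3_iff)

lemma card_enc: "(\<And>v. col v < 3) \<Longrightarrow> enc col h = Some A \<Longrightarrow> card A = weight h"
proof (cases h)
  case (HCv r)
  assume "\<And>v. col v < 3" "enc col h = Some A"
  then show ?thesis using HCv less_3_iff[of "col r"] by auto
qed auto

lemma other_two_colours:
  fixes c1 c2 c3 :: nat
  assumes "c1 < 3" "c2 < 3" "c3 < 3" "c1 \<noteq> c2" "c1 \<noteq> c3" "c2 \<noteq> c3"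
  shows "{c1, c2} = {0, 1, 2} - {c3}"
  using assms by (auto simp: less_3_iff)

lemma hmul_Inf_right [simp]: "hmul E a Inf = Inf"
  by (cases a) simp_all

lemma wval_eq_HAv:
  assumes "p \<noteq> []" and "wval (hmul E) \<theta> p = HAv t"
  shows "\<exists>z. p = [z] \<and> \<theta> z = HAv t"
  using assms hmul_neq_HAv by (cases p rule: remdups_adj.cases) auto

lemma wval_eq_HCv:
  assumes L: "linear_3uniform E" and "p \<noteq> []" and val: "wval (hmul E) \<theta> p = HCv w"
  shows "(\<exists>z. p = [z] \<and> \<theta> z = HCv w) \<or>
    (\<exists>z1 z2 s t. p = [z1, z2] \<and> \<theta> z1 = HAv s \<and> \<theta> z2 = HAv t \<and> {s, t, w} \<in> E)"
proof (cases p rule: remdups_adj.cases)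
  case (3 z1 z2 zs)
  then have val': "hmul E (\<theta> z1) (wval (hmul E) \<theta> (z2 # zs)) = HCv w" using val by simp
  then have "hmul E (\<theta> z1) (wval (hmul E) \<theta> (z2 # zs)) \<noteq> Inf" by simp
  with L show ?thesis
    by (cases rule: hmul_nonzero_cases) (use 3 val' wval_eq_HAv[of "z2 # zs" E \<theta>] in auto)
qed (use assms in simp_all)

lemma Sc_mul_enc_edge:
  assumes col: "\<And>v. col v < 3" and "inj_on col {s, t, w}" and "s \<noteq> t" "s \<noteq> w" "t \<noteq> w"
  shows "Sc_mul (enc col (HAv s)) (enc col (HAv t)) = enc col (HCv w)"
proof -
  have ne: "col s \<noteq> col t" "col s \<noteq> col w" "col t \<noteq> col w" using assms(2-) unfolding inj_on_def by auto
  then have "{col s, col t} = {0, 1, 2} - {col w}" by (rule other_two_colours[OF col col col])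
  then show ?thesis using ne by (simp add: insert_commute)
qed

lemma Sc_mul_enc_complement:
  assumes "col s < 3"
  shows "Sc_mul (enc col (HAv s)) (enc col (HCv s)) = enc col HA"
    and "Sc_mul (enc col (HCv s)) (enc col (HAv s)) = enc col HA"
  using assms by (auto simp: less_3_iff)

lemma wval_enc:
  assumes L: "linear_3uniform E" and rb: "rainbow {f \<in> E. f \<subseteq> R} col"
    and letters: "\<And>z. z \<in> set p \<Longrightarrow> hs_vertices (\<theta> z) \<subseteq> R"
    and "p \<noteq> []" and "wval (hmul E) \<theta> p \<noteq> Inf" and "hs_vertices (wval (hmul E) \<theta> p) \<subseteq> R"
  shows "wval Sc_mul (\<lambda>z. enc col (\<theta> z)) p = enc col (wval (hmul E) \<theta> p)"
  using assms(3-)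
proof (induction p rule: induct_list012)
  case (3 z y zs)
  let ?b = "wval (hmul E) \<theta> (y # zs)"
  have col: "col v < 3" for v using rb unfolding rainbow_def by blast
  have nz: "hmul E (\<theta> z) ?b \<noteq> Inf" using "3.prems"(3) by simp
  from L this have "hs_vertices ?b \<subseteq> R \<and> Sc_mul (enc col (\<theta> z)) (enc col ?b) = enc col (hmul E (\<theta> z) ?b)"
  proof (cases rule: hmul_nonzero_cases)
    case (edge s t w)
    obtain y' where "y # zs = [y']" "\<theta> y' = HAv t" using wval_eq_HAv[OF _ edge(2)] by blast
    then have "{s, t, w} \<subseteq> R" using "3.prems"(1)[of z] "3.prems"(1)[of y'] "3.prems"(4) edge by auto
    moreover from this have "inj_on col {s, t, w}" using rb edge(3) unfolding rainbow_def by auto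
    then have "Sc_mul (enc col (HAv s)) (enc col (HAv t)) = enc col (HCv w)"
      using Sc_mul_enc_edge[of col] col edge_distinct[OF L edge(3)] by blast
    ultimately show ?thesis unfolding edge(4) unfolding edge(1,2) by simp
  next
    case (left s)
    then show ?thesis using "3.prems"(1)[of z] Sc_mul_enc_complement(1)[of col s] col by simp
  next
    case (right s)
    then show ?thesis using "3.prems"(1)[of z] Sc_mul_enc_complement(2)[of col s] col by simp
  qed
  moreover have "?b \<noteq> Inf" using nz by auto
  ultimately show ?case using "3.IH"(2) "3.prems"(1) by simp
qed simp_all

text \<open>The short words of \<open>S\<^sub>H\<close>-values whose encoding along \<open>col\<close> may coincide with the encoding
  of \<open>x\<close> although their product differs from \<open>x\<close>.\<close>

fun misleading :: "nat set set \<Rightarrow> (nat \<Rightarrow> nat) \<Rightarrow> hs \<Rightarrow> hs list \<Rightarrow> bool" where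
  "misleading E col (HCv w) [HAv s, HAv t] \<longleftrightarrow> {s, t, w} \<notin> E \<and> col s \<noteq> col t"
| "misleading E col HA [HAv r, HCv w] \<longleftrightarrow> r \<noteq> w \<and> col r = col w"
| "misleading E col HA [HCv w, HAv r] \<longleftrightarrow> r \<noteq> w \<and> col r = col w"
| "misleading E col HA [HAv r1, HAv r2, HAv r3] \<longleftrightarrow>
     {r1, r2, r3} \<notin> E \<and> col r1 \<noteq> col r2 \<and> col r1 \<noteq> col r3 \<and> col r2 \<noteq> col r3"
| "misleading E col _ _ \<longleftrightarrow> False"

lemma weight_eq_iff:
  "weight h = 1 \<longleftrightarrow> (\<exists>r. h = HAv r)" "weight h = 2 \<longleftrightarrow> (\<exists>r. h = HCv r)" "weight h = 3 \<longleftrightarrow> h = HA"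
  "weight h = 0 \<longleftrightarrow> h = Inf"
  by (cases h; simp)+

lemma weight_le_3: "weight h \<le> 3"
  by (cases h) simp_all

lemma finite_enc: "(\<And>v. col v < 3) \<Longrightarrow> enc col h = Some A \<Longrightarrow> finite A"
  by (cases h) auto

lemma enc_Sc_mul:
  assumes col: "\<And>v. col v < 3" and "Sc_mul (enc col h1) (enc col h2) = Some S"
  obtains A B where "enc col h1 = Some A" "enc col h2 = Some B" "A \<inter> B = {}"
    "card S = weight h1 + weight h2" "1 \<le> weight h1" "1 \<le> weight h2"
proof -
  obtain A B where AB: "enc col h1 = Some A" "enc col h2 = Some B" "A \<inter> B = {}" "S = A \<union> B"
    using assms(2) by (auto simp: Sc_mul_eq_Some_iff)
  have "card S = card A + card B"
    using AB finite_enc[OF col] by (simp add: card_Un_disjoint)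
  also have "\<dots> = weight h1 + weight h2" using card_enc[OF col] AB by simp
  finally have "card S = weight h1 + weight h2" .
  moreover have "h1 \<noteq> Inf" "h2 \<noteq> Inf" using AB by auto
  then have "1 \<le> weight h1" "1 \<le> weight h2" by (cases h1, auto, cases h2, auto)
  ultimately show thesis using that AB by blast
qed

lemma misleading_pair:
  assumes L: "linear_3uniform E" and col: "\<And>v. col v < 3"
    and eq: "Sc_mul (enc col h1) (enc col h2) = enc col x" and "x \<noteq> Inf" and ne: "hmul E h1 h2 \<noteq> x"
  shows "misleading E col x [h1, h2]"
proof -
  obtain S where S: "enc col x = Some S" using \<open>x \<noteq> Inf\<close> by (cases x) auto
  then have "Sc_mul (enc col h1) (enc col h2) = Some S" using eq by simp
  then obtain A B where AB: "enc col h1 = Some A" "enc col h2 = Some B" "A \<inter> B = {}"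
    and w: "card S = weight h1 + weight h2" "1 \<le> weight h1" "1 \<le> weight h2"
    by (rule enc_Sc_mul[OF col])
  have "weight x = weight h1 + weight h2" using card_enc[OF col S] w(1) by simp
  have "weight x \<le> 3" by (rule weight_le_3)
  then consider "weight h1 = 1" "weight h2 = 1" "weight x = 2" | "weight h1 = 1" "weight h2 = 2" "weight x = 3"
    | "weight h1 = 2" "weight h2 = 1" "weight x = 3"
    using \<open>weight x = weight h1 + weight h2\<close> w(2,3) by linarith
  then show ?thesis
  proof cases
    case 1
    then obtain s t w where hx: "h1 = HAv s" "h2 = HAv t" "x = HCv w" unfolding weight_eq_iff by blast
    then have "{s, t, w} \<notin> E" using ne hmul_HAv_HAv_eq_HCv[OF L] by auto
    moreover have "col s \<noteq> col t" using AB hx by auto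
    ultimately show ?thesis using hx by simp
  next
    case 2
    then obtain r w where hx: "h1 = HAv r" "h2 = HCv w" "x = HA" unfolding weight_eq_iff by blast
    then have "r \<noteq> w" using ne by auto
    moreover have "col r = col w" using AB hx col[of r] by (auto simp: less_3_iff)
    ultimately show ?thesis using hx by simp
  next
    case 3
    then obtain r w where hx: "h1 = HCv w" "h2 = HAv r" "x = HA" unfolding weight_eq_iff by blast
    then have "r \<noteq> w" using ne by auto
    moreover have "col r = col w" using AB hx col[of r] by (auto simp: less_3_iff)
    ultimately show ?thesis using hx by simp
  qed
qed

lemma misleading_triple:
  assumes L: "linear_3uniform E" and col: "\<And>v. col v < 3"
    and eq: "Sc_mul (enc col h1) (Sc_mul (enc col h2) (enc col h3)) = enc col x" and "x \<noteq> Inf"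
    and ne: "hmul E h1 (hmul E h2 h3) \<noteq> x"
  shows "misleading E col x [h1, h2, h3]"
proof -
  obtain S where S: "enc col x = Some S" using \<open>x \<noteq> Inf\<close> by (cases x) auto
  then obtain A T where AT: "enc col h1 = Some A" "Sc_mul (enc col h2) (enc col h3) = Some T"
    "A \<inter> T = {}" "S = A \<union> T"
    using eq by (auto simp: Sc_mul_eq_Some_iff)
  obtain B C where BC: "enc col h2 = Some B" "enc col h3 = Some C" "B \<inter> C = {}"
    and wT: "card T = weight h2 + weight h3" "1 \<le> weight h2" "1 \<le> weight h3"
    by (rule enc_Sc_mul[OF col AT(2)])
  have "finite A" "finite T" using AT(1,2) BC finite_enc[of col] col by auto
  then have "card S = card A + card T" using AT(3,4) by (simp add: card_Un_disjoint)
  then have "weight x = weight h1 + card T"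
    using card_enc[of col x S] card_enc[of col h1 A] col S AT(1) by simp
  moreover have "1 \<le> weight h1" using AT(1) by (cases h1) auto
  ultimately have "weight h1 = 1" "weight h2 = 1" "weight h3 = 1" "weight x = 3"
    using wT weight_le_3[of x] by linarith+
  then obtain r1 r2 r3 where hx: "h1 = HAv r1" "h2 = HAv r2" "h3 = HAv r3" "x = HA"
    unfolding weight_eq_iff by blast
  have "{r1, r2, r3} \<notin> E"
  proof
    assume "{r1, r2, r3} \<in> E"
    then have "hmul E (hmul E h1 h2) h3 = x" unfolding hx by (simp only: hmul_hyperedge[OF L]) simp
    then show False using ne by (simp only: hmul_assoc[OF L])
  qed
  moreover have "col r1 \<noteq> col r2" "col r1 \<noteq> col r3" "col r2 \<noteq> col r3"
    using AT BC hx by (auto simp: Sc_mul_eq_Some_iff)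
  ultimately show ?thesis using hx by simp
qed

lemma enc_eq_imp_misleading:
  assumes L: "linear_3uniform E" and col: "\<And>v. col v < 3"
    and "q \<noteq> []" and "x \<noteq> Inf"
    and eq: "wval Sc_mul (\<lambda>z. enc col (\<theta> z)) q = enc col x"
    and ne: "wval (hmul E) \<theta> q \<noteq> x"
    and letters: "\<And>z. z \<in> set q \<Longrightarrow> weight (\<theta> z) = weight x \<Longrightarrow> \<theta> z = x"
  shows "misleading E col x (map \<theta> q)"
proof -
  obtain S where S: "enc col x = Some S" using \<open>x \<noteq> Inf\<close> by (cases x) auto
  have "length q \<le> card S"
    using Sc_wval_length_le[of q "\<lambda>z. enc col (\<theta> z)" S] enc_in_Sc_carrier col eq S \<open>q \<noteq> []\<close> by auto
  also have "card S = weight x" using card_enc[of col x S] col S by simp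
  finally have "length q \<le> 3" using weight_le_3[of x] by linarith
  then consider z where "q = [z]" | z1 z2 where "q = [z1, z2]" | z1 z2 z3 where "q = [z1, z2, z3]"
    using \<open>q \<noteq> []\<close> by (auto simp: numeral_3_eq_3 le_Suc_eq length_Suc_conv)
  then show ?thesis
  proof cases
    case (1 z)
    then have "weight (\<theta> z) = weight x"
      using eq S card_enc[of col x S] card_enc[of col "\<theta> z" S] col by simp
    then show ?thesis using letters ne 1 by simp
  next
    case (2 z1 z2)
    then show ?thesis using misleading_pair[OF L col _ \<open>x \<noteq> Inf\<close>] eq ne by simp
  next
    case (3 z1 z2 z3)
    then show ?thesis using misleading_triple[OF L col _ \<open>x \<noteq> Inf\<close>] eq ne by simp
  qed
qed

lemma cycle_free_triangle:
  assumes cf: "cycle_free F" and card: "\<forall>f\<in>F. card f = 3"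
    and ab: "adjacent_in F a b" and bc: "adjacent_in F b c" and ca: "adjacent_in F c a"
  shows "{a, b, c} \<in> F"
proof -
  obtain f1 f2 f3 where f: "f1 \<in> F" "a \<in> f1" "b \<in> f1" "f2 \<in> F" "b \<in> f2" "c \<in> f2"
    "f3 \<in> F" "c \<in> f3" "a \<in> f3"
    using ab bc ca unfolding adjacent_in_def by blast
  have d: "a \<noteq> b" "b \<noteq> c" "c \<noteq> a" using ab bc ca unfolding adjacent_in_def by blast+
  have edge: "f = {a, b, c}" if "f \<in> F" "{a, b, c} \<subseteq> f" for f
  proof -
    have "finite f" "card {a, b, c} = card f" using that card d by (auto simp: card_ge_0_finite)
    then show ?thesis using card_subset_eq that(2) by metis
  qed
  show ?thesis
  proof (cases "f1 = f2 \<or> f2 = f3 \<or> f3 = f1")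
    case True
    then show ?thesis using edge f by blast
  next
    case False
    have "\<forall>i<3. [a, b, c] ! i \<in> [f1, f2, f3] ! i \<and> [a, b, c] ! (Suc i mod 3) \<in> [f1, f2, f3] ! i"
      using f by (auto simp: less_3_iff)
    then have "has_cycle_of_length F 3"
      unfolding has_cycle_of_length_def using d False f
      by (intro exI[of _ "[a, b, c]"] exI[of _ "[f1, f2, f3]"]) auto
    then show ?thesis using cf unfolding cycle_free_def by blast
  qed
qed

lemma misleading_shapes:
  assumes "misleading E col x hs"
  shows "(\<exists>w s t. x = HCv w \<and> hs = [HAv s, HAv t] \<and> {s, t, w} \<notin> E) \<or>
    (\<exists>r w. x = HA \<and> (hs = [HAv r, HCv w] \<or> hs = [HCv w, HAv r])) \<or>
    (\<exists>r1 r2 r3. x = HA \<and> hs = [HAv r1, HAv r2, HAv r3] \<and> {r1, r2, r3} \<notin> E)"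
  using assms by (rule misleading.elims) auto

lemma exists_colouring_not_misleading:
  assumes cf: "cycle_free F" and card: "\<forall>f\<in>F. card f = 3" and "F \<subseteq> E"
    and P: "two_point_colourable F"
    and adj: "\<And>w s. x = HCv w \<Longrightarrow> HAv s \<in> set hs \<Longrightarrow> adjacent_in F s w"
  shows "\<exists>col. rainbow F col \<and> \<not> misleading E col x hs"
proof -
  have equal_colours: "\<exists>col. rainbow F col \<and> col a = col b" if "\<not> adjacent_in F a b" for a b
    using two_point_colourableD[OF P, of a b 0 0] that unfolding admissible_def by auto
  have triangle: "{a, b, c} \<in> E"
    if "adjacent_in F a b" "adjacent_in F b c" "adjacent_in F c a" for a b c
    using cycle_free_triangle[OF cf card that] \<open>F \<subseteq> E\<close> by blast
  obtain col0 where col0: "rainbow F col0"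
    using two_point_colourableD[OF P admissible_refl[of 0]] by auto
  show ?thesis
  proof (cases "\<exists>col. misleading E col x hs")
    case True
    then consider (pair_C) w s t where "x = HCv w" "hs = [HAv s, HAv t]" "{s, t, w} \<notin> E"
      | (pair_A) r w where "x = HA" "hs = [HAv r, HCv w] \<or> hs = [HCv w, HAv r]"
      | (triple) r1 r2 r3 where "x = HA" "hs = [HAv r1, HAv r2, HAv r3]" "{r1, r2, r3} \<notin> E"
      using misleading_shapes by blast
    then show ?thesis
    proof cases
      case pair_C
      then have "adjacent_in F t w" "adjacent_in F w s"
        using adj[of w] unfolding adjacent_in_def by auto
      then have "\<not> adjacent_in F s t" using triangle[of s t w] pair_C(3) by blast
      then show ?thesis using equal_colours pair_C by fastforce
    next
      case pair_A
      have "admissible F r w 0 1 \<or> r = w" unfolding admissible_def by simp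
      then obtain col where "rainbow F col" "r \<noteq> w \<longrightarrow> col r = 0 \<and> col w = 1"
        using two_point_colourableD[OF P] col0 by blast
      then show ?thesis using pair_A by auto
    next
      case triple
      have "\<not> adjacent_in F r1 r2 \<or> \<not> adjacent_in F r2 r3 \<or> \<not> adjacent_in F r3 r1"
        using triangle triple(3) by blast
      then show ?thesis using equal_colours triple by (metis misleading.simps(4))
    qed
  qed (use col0 in blast)
qed

definition term_vars :: "aiterm \<Rightarrow> nat set" where
  "term_vars t = \<Union> (set ` t)"

lemma finite_term_vars: "is_term t \<Longrightarrow> finite (term_vars t)"
  unfolding term_vars_def is_term_def by auto

lemma wval_cong: "(\<And>z. z \<in> set p \<Longrightarrow> \<phi> z = \<psi> z) \<Longrightarrow> wval mul \<phi> p = wval mul \<psi> p"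
  by (induction p rule: induct_list012) simp_all

lemma set_subset_term_vars: "p \<in> t \<Longrightarrow> set p \<subseteq> term_vars t"
  unfolding term_vars_def by blast

lemma Sc_wval_None: "z \<in> set p \<Longrightarrow> \<phi> z = None \<Longrightarrow> wval Sc_mul \<phi> p = None"
  by (induction p rule: induct_list012) auto

lemma term_var_weight_eq_imp_eq:
  assumes L: "linear_3uniform E" and u: "is_term u" and ux: "\<And>p. p \<in> u \<Longrightarrow> wval (hmul E) \<theta> p = x"
    and "z \<in> term_vars u" and weight: "weight (\<theta> z) = weight x"
  shows "\<theta> z = x"
proof -
  obtain p where p: "p \<in> u" "z \<in> set p" using assms(4) unfolding term_vars_def by blast
  then have "p \<noteq> []" using u unfolding is_term_def by blast
  show ?thesis
  proof (cases x)
    case (HAv t)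
    then show ?thesis using wval_eq_HAv[OF \<open>p \<noteq> []\<close>] ux[OF p(1)] p(2) by fastforce
  next
    case (HCv w)
    then show ?thesis using wval_eq_HCv[OF L \<open>p \<noteq> []\<close>] ux[OF p(1)] p(2) weight by fastforce
  qed (use weight weight_eq_iff in auto)
qed

lemma term_var_HAv_adjacent:
  assumes L: "linear_3uniform E" and u: "is_term u" and ux: "\<And>p. p \<in> u \<Longrightarrow> wval (hmul E) \<theta> p = HCv w"
    and z: "z \<in> term_vars u" "\<theta> z = HAv s"
    and R: "\<And>z. z \<in> term_vars u \<Longrightarrow> hs_vertices (\<theta> z) \<subseteq> R" and "w \<in> R"
  shows "adjacent_in {f \<in> E. f \<subseteq> R} s w"
proof -
  obtain p where p: "p \<in> u" "z \<in> set p" using z(1) unfolding term_vars_def by blast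
  then have "p \<noteq> []" using u unfolding is_term_def by blast
  obtain z' t where "z' \<in> set p" "\<theta> z' = HAv t" and edge: "{s, t, w} \<in> E"
    using wval_eq_HCv[OF L \<open>p \<noteq> []\<close> ux[OF p(1)]] p(2) z(2) by (auto simp: insert_commute) blast+
  moreover have "z' \<in> term_vars u" using p(1) \<open>z' \<in> set p\<close> set_subset_term_vars by blast
  ultimately have "{s, t, w} \<subseteq> R" using R[of z] R[of z'] z \<open>w \<in> R\<close> by auto
  then show ?thesis using edge edge_distinct[OF L edge] unfolding adjacent_in_def by blast
qed

lemma small_restriction_hyperforest:
  assumes L: "linear_3uniform E" and G: "girth_greater E N" and "finite R" and "card R \<le> N"
  shows "cycle_free {f \<in> E. f \<subseteq> R}" and "two_point_colourable {f \<in> E. f \<subseteq> R}"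
proof -
  show cf: "cycle_free {f \<in> E. f \<subseteq> R}"
    unfolding cycle_free_def
  proof (intro allI notI)
    fix k assume cyc: "has_cycle_of_length {f \<in> E. f \<subseteq> R} k"
    then obtain vs es where c: "length vs = k" "length es = k" "distinct vs"
      "set es \<subseteq> {f \<in> E. f \<subseteq> R}" "\<forall>i<k. vs ! i \<in> es ! i"
      unfolding has_cycle_of_length_def by blast
    have "set vs \<subseteq> R"
    proof
      fix a assume "a \<in> set vs"
      then obtain i where "i < k" "vs ! i = a" using c(1) by (metis in_set_conv_nth)
      then show "a \<in> R" using c(2,4,5) nth_mem by blast
    qed
    then have "k \<le> N" using c(1,3) assms(3,4) by (metis card_mono distinct_card order_trans)
    moreover have "has_cycle_of_length E k" using has_cycle_of_length_mono[OF cyc] by blast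
    ultimately show False using G unfolding girth_greater_def by fastforce
  qed
  have "finite {f \<in> E. f \<subseteq> R}" using \<open>finite R\<close> by (simp add: finite_subset[of _ "Pow R"] Pow_def)
  moreover have "\<forall>f\<in>{f \<in> E. f \<subseteq> R}. card f = 3" using card_edge[OF L] by blast
  ultimately show "two_point_colourable {f \<in> E. f \<subseteq> R}" using cf by (intro cycle_free_two_point_colourable)
qed

lemma finite_hs_vertices [simp]: "finite (hs_vertices h)"
  by (cases h) simp_all

lemma card_vertices_le:
  assumes "finite Z"
  shows "card ((\<Union>z\<in>Z. hs_vertices (\<theta> z)) \<union> hs_vertices x) \<le> card Z + 1"
proof -
  have card_le: "card (hs_vertices h) \<le> 1" for h by (cases h) simp_all
  have "card (\<Union>z\<in>Z. hs_vertices (\<theta> z)) \<le> (\<Sum>z\<in>Z. card (hs_vertices (\<theta> z)))"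
    by (rule card_UN_le[OF assms])
  also have "\<dots> \<le> card Z" using sum_bounded_above[of Z "\<lambda>z. card (hs_vertices (\<theta> z))" 1] card_le by simp
  finally show ?thesis using card_Un_le[of "\<Union>z\<in>Z. hs_vertices (\<theta> z)" "hs_vertices x"] card_le[of x]
    by linarith
qed

lemma encoding_transfer:
  assumes L: "linear_3uniform E" and u: "is_term u" and v: "is_term v"
    and Sc: "flat_satisfies None Sc_mul Sc_carrier u v"
    and u_words: "\<And>p. p \<in> u \<Longrightarrow> wval (hmul E) \<theta> p = x" and "x \<noteq> Inf"
    and rb: "rainbow {f \<in> E. f \<subseteq> R} col"
    and R: "\<And>z. z \<in> term_vars u \<Longrightarrow> hs_vertices (\<theta> z) \<subseteq> R" "hs_vertices x \<subseteq> R"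
    and "q \<in> v"
  shows "set q \<subseteq> term_vars u \<and> wval Sc_mul (\<lambda>z. enc col (\<theta> z)) q = enc col x"
proof -
  define \<phi> where "\<phi> z = (if z \<in> term_vars u then enc col (\<theta> z) else None)" for z
  have enc_\<phi>: "wval Sc_mul \<phi> p = wval Sc_mul (\<lambda>z. enc col (\<theta> z)) p" if "set p \<subseteq> term_vars u" for p
    unfolding \<phi>_def using that by (intro wval_cong) auto
  have words: "u \<noteq> {}" "v \<noteq> {}" "\<And>p. p \<in> u \<Longrightarrow> p \<noteq> []"
    using u v unfolding is_term_def by auto
  have col3: "col v < 3" for v using rb unfolding rainbow_def by blast
  have \<phi>: "\<forall>z. \<phi> z \<in> Sc_carrier"
    using enc_in_Sc_carrier[of col, OF col3] by (simp add: \<phi>_def Sc_carrier_iff(1))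
  have "wval Sc_mul \<phi> p = enc col x" if "p \<in> u" for p
  proof -
    have p: "set p \<subseteq> term_vars u" using that by (rule set_subset_term_vars)
    have "\<And>z. z \<in> set p \<Longrightarrow> hs_vertices (\<theta> z) \<subseteq> R" using p R(1) by blast
    then have "wval Sc_mul (\<lambda>z. enc col (\<theta> z)) p = enc col (wval (hmul E) \<theta> p)"
      using wval_enc[OF L rb _ words(3)[OF that]] u_words[OF that] \<open>x \<noteq> Inf\<close> R(2) by simp
    then show ?thesis using enc_\<phi>[OF p] u_words[OF that] by simp
  qed
  then have "tval None Sc_mul \<phi> u = enc col x"
    using words(1) by (intro tval_eqI) (simp add: image_eq_singleton_iff)
  moreover have "tval None Sc_mul \<phi> u = tval None Sc_mul \<phi> v"
    using Sc \<phi> unfolding flat_satisfies_def by blast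
  moreover have "enc col x \<noteq> None" using \<open>x \<noteq> Inf\<close> by (cases x) auto
  ultimately have q: "wval Sc_mul \<phi> q = enc col x"
    using tval_eq_iff[OF words(2) \<open>enc col x \<noteq> None\<close>] \<open>q \<in> v\<close> by simp
  then have "\<phi> z \<noteq> None" if "z \<in> set q" for z using that Sc_wval_None \<open>enc col x \<noteq> None\<close> by metis
  then have "set q \<subseteq> term_vars u" unfolding \<phi>_def by (meson subsetI)
  then show ?thesis using q enc_\<phi>[of q] by simp
qed

lemma SH_tval_preserved:
  assumes L: "linear_3uniform E" and G: "girth_greater E N" and u: "is_term u" and v: "is_term v"
    and Sc: "flat_satisfies None Sc_mul Sc_carrier u v" and bound: "card (term_vars u) + 1 \<le> N"
    and ux: "tval Inf (hmul E) \<theta> u = x" and "x \<noteq> Inf"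
  shows "tval Inf (hmul E) \<theta> v = x"
proof (rule ccontr)
  assume "tval Inf (hmul E) \<theta> v \<noteq> x"
  have words: "u \<noteq> {}" "v \<noteq> {}" "\<And>p. p \<in> u \<Longrightarrow> p \<noteq> []" "\<And>p. p \<in> v \<Longrightarrow> p \<noteq> []"
    using u v unfolding is_term_def by auto
  have u_words: "wval (hmul E) \<theta> p = x" if "p \<in> u" for p
    using ux tval_eq_iff[OF words(1) \<open>x \<noteq> Inf\<close>] that by blast
  obtain q where q: "q \<in> v" "wval (hmul E) \<theta> q \<noteq> x"
    using \<open>tval Inf (hmul E) \<theta> v \<noteq> x\<close> tval_eq_iff[OF words(2) \<open>x \<noteq> Inf\<close>] by blast
  define R where "R = (\<Union>z\<in>term_vars u. hs_vertices (\<theta> z)) \<union> hs_vertices x"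
  define F where "F = {f \<in> E. f \<subseteq> R}"
  have R: "\<And>z. z \<in> term_vars u \<Longrightarrow> hs_vertices (\<theta> z) \<subseteq> R" "hs_vertices x \<subseteq> R"
    unfolding R_def by auto
  have "finite R" "card R \<le> N"
    using card_vertices_le[OF finite_term_vars[OF u], of \<theta> x] bound finite_term_vars[OF u]
    unfolding R_def by auto
  then have cf: "cycle_free F" and P: "two_point_colourable F"
    unfolding F_def by (rule small_restriction_hyperforest[OF L G])+
  have card: "\<forall>f\<in>F. card f = 3" using card_edge[OF L] unfolding F_def by blast
  obtain col0 where "rainbow F col0" using two_point_colourableD[OF P admissible_refl[of 0]] by auto
  then have q_vars: "set q \<subseteq> term_vars u"
    using encoding_transfer[OF L u v Sc u_words \<open>x \<noteq> Inf\<close> _ R q(1)] unfolding F_def by blast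
  have "adjacent_in F s w" if xw: "x = HCv w" and s: "HAv s \<in> set (map \<theta> q)" for w s
  proof -
    obtain z where "z \<in> set q" "\<theta> z = HAv s" using s by auto
    then show ?thesis using term_var_HAv_adjacent[where \<theta>=\<theta>, OF L u _ _ _ R(1)] q_vars u_words xw R(2)
      unfolding F_def by auto
  qed
  moreover have "F \<subseteq> E" unfolding F_def by blast
  ultimately obtain col where col: "rainbow F col" "\<not> misleading E col x (map \<theta> q)"
    using exists_colouring_not_misleading[OF cf card _ P] by blast
  have "wval Sc_mul (\<lambda>z. enc col (\<theta> z)) q = enc col x"
    using encoding_transfer[OF L u v Sc u_words \<open>x \<noteq> Inf\<close> _ R q(1)] col(1) unfolding F_def by blast
  moreover have "\<theta> z = x" if "z \<in> set q" "weight (\<theta> z) = weight x" for z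
    using term_var_weight_eq_imp_eq[OF L u u_words] q_vars that by blast
  moreover have "col v < 3" for v using col(1) unfolding rainbow_def by blast
  ultimately have "misleading E col x (map \<theta> q)"
    using enc_eq_imp_misleading[OF L _ words(4)[OF q(1)] \<open>x \<noteq> Inf\<close> _ q(2)] by blast
  then show False using col(2) by blast
qed

section \<open>Nonfinite basability\<close>

lemma SH_satisfies_Sc_identity:
  assumes L: "linear_3uniform E" and G: "girth_greater E N" and u: "is_term u" and v: "is_term v"
    and Sc: "flat_satisfies None Sc_mul Sc_carrier u v"
    and bound: "card (term_vars u \<union> term_vars v) + 1 \<le> N"
  shows "flat_satisfies Inf (hmul E) UNIV u v"
  unfolding flat_satisfies_def
proof (intro allI impI)
  fix \<theta> :: "nat \<Rightarrow> hs"
  have "card (term_vars u) \<le> card (term_vars u \<union> term_vars v)"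
    "card (term_vars v) \<le> card (term_vars u \<union> term_vars v)"
    using finite_term_vars[OF u] finite_term_vars[OF v] by (simp_all add: card_mono)
  then have bounds: "card (term_vars u) + 1 \<le> N" "card (term_vars v) + 1 \<le> N" using bound by linarith+
  have Sc': "flat_satisfies None Sc_mul Sc_carrier v u" using Sc unfolding flat_satisfies_def by metis
  show "tval Inf (hmul E) \<theta> u = tval Inf (hmul E) \<theta> v"
  proof (cases "tval Inf (hmul E) \<theta> u = Inf")
    case True
    then show ?thesis
      using SH_tval_preserved[OF L G v u Sc' bounds(2) HOL.refl] by (cases "tval Inf (hmul E) \<theta> v = Inf") auto
  next
    case False
    then show ?thesis using SH_tval_preserved[OF L G u v Sc bounds(1) HOL.refl] by simp
  qed
qed

lemma linear_if_girth_greater: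
  assumes "three_uniform V E" and G: "girth_greater E N" and "2 \<le> N"
  shows "linear_3uniform E"
  unfolding linear_3uniform_def
proof (intro conjI ballI allI impI)
  show "card e = 3" if "e \<in> E" for e using assms(1) that unfolding three_uniform_def by blast
next
  fix e1 e2 a b assume e: "e1 \<in> E" "e2 \<in> E" and ab: "a \<noteq> b" "a \<in> e1" "b \<in> e1" "a \<in> e2" "b \<in> e2"
  show "e1 = e2"
  proof (rule ccontr)
    assume "e1 \<noteq> e2"
    have "\<forall>i<2. [a, b] ! i \<in> [e1, e2] ! i \<and> [a, b] ! (Suc i mod 2) \<in> [e1, e2] ! i"
      using ab by (auto simp: less_2_cases_iff)
    then have "has_cycle_of_length E 2"
      unfolding has_cycle_of_length_def using ab \<open>e1 \<noteq> e2\<close> e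
      by (intro exI[of _ "[a, b]"] exI[of _ "[e1, e2]"]) auto
    then show False using G \<open>2 \<le> N\<close> unfolding girth_greater_def by fastforce
  qed
qed

lemma tval_t_H:
  assumes L: "linear_3uniform E" and "E \<noteq> {}"
  shows "tval Inf (hmul E) HAv (t_H E) = HA"
proof (rule tval_eqI)
  have "wval (hmul E) HAv p = HA" if hyperedge: "p \<in> t_H E" for p
  proof -
    obtain a b c where p: "p = [a, b, c]" "{a, b, c} \<in> E" using hyperedge unfolding t_H_def by blast
    then have "hmul E (hmul E (HAv a) (HAv b)) (HAv c) = HA" by (simp only: hmul_hyperedge[OF L]) simp
    then show ?thesis using p(1) by (simp only: hmul_assoc[OF L] wval.simps)
  qed
  moreover obtain e where "e \<in> E" using assms(2) by blast
  then obtain a b c where "{a, b, c} \<in> E" using card_edge[OF L] by (metis card_3_iff)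
  then have "t_H E \<noteq> {}" unfolding t_H_def by blast
  ultimately show "wval (hmul E) HAv ` t_H E = {HA}" by (simp add: image_eq_singleton_iff)
qed

lemma SH_refutes_t_H_identity:
  assumes L: "linear_3uniform E" and "E \<noteq> {}" and w: "non_hyperedge_term V E w"
  shows "\<not> flat_satisfies Inf (hmul E) UNIV (t_H E) (tsum (t_H E) w)"
proof -
  have "w \<noteq> {}" "tval Inf (hmul E) HAv w \<noteq> HA"
    using w unfolding non_hyperedge_term_def hval_def is_term_def by auto
  moreover have "t_H E \<noteq> {}" using tval_t_H[OF assms(1,2)] unfolding tval_def by auto
  ultimately have "tval Inf (hmul E) HAv (tsum (t_H E) w) = Inf"
    unfolding tsum_def using tval_Un tval_t_H[OF assms(1,2)] by (metis (full_types))
  then show ?thesis unfolding flat_satisfies_def using tval_t_H[OF assms(1,2)] by force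
qed

lemma le_choose_two:
  assumes "3 \<le> m"
  shows "m \<le> m choose 2"
proof -
  have "m * 2 \<le> m * (m - 1)" using assms by (intro mult_le_mono2) simp
  then have "m \<le> m * (m - 1) div 2" by linarith
  then show ?thesis by (simp add: choose_two)
qed

theorem theorem2p1:
  fixes V :: "nat \<Rightarrow> nat set" and E :: "nat \<Rightarrow> nat set set"
    and \<Sigma> :: "(aiterm \<times> aiterm) set" and w :: "nat \<Rightarrow> aiterm"
  assumes hyp: "\<And>n. n \<ge> 2 \<Longrightarrow> three_uniform (V n) (E n) \<and> no_isolated (V n) (E n) \<and>
      \<not> two_colourable (V n) (E n) \<and> girth_greater (E n) (3 * ((3 * n) choose 2))"
    and basis: "identity_set \<Sigma>"
    and contains_Sc: "\<forall>(u, v)\<in>\<Sigma>. Sc_satisfies u v"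
    and w_nonhyp: "\<And>n. n \<ge> 2 \<Longrightarrow> non_hyperedge_term (V n) (E n) (w n)"
    and sat: "\<And>n. n \<ge> 2 \<Longrightarrow> derivable \<Sigma> (t_H (E n)) (tsum (t_H (E n)) (w n))"
  shows "\<not> finitely_based \<Sigma>"
proof
  assume "finitely_based \<Sigma>"
  then obtain \<Sigma>' where "finite \<Sigma>'" and \<Sigma>': "identity_set \<Sigma>'"
    and from_\<Sigma>: "\<forall>(u, v)\<in>\<Sigma>'. derivable \<Sigma> u v" and to_\<Sigma>: "\<forall>(u, v)\<in>\<Sigma>. derivable \<Sigma>' u v"
    unfolding finitely_based_def by blast
  then have "finite ((\<lambda>(u, v). card (term_vars u \<union> term_vars v)) ` \<Sigma>')" by simp
  then obtain M where "\<forall>k\<in>(\<lambda>(u, v). card (term_vars u \<union> term_vars v)) ` \<Sigma>'. k \<le> M"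
    using finite_nat_set_iff_bounded_le by blast
  then have M: "\<forall>(u, v)\<in>\<Sigma>'. card (term_vars u \<union> term_vars v) \<le> M" by fast
  define n where "n = M + 2"
  then have n: "2 \<le> n" by simp
  define N where "N = 3 * ((3 * n) choose 2)"
  have "n \<le> N" using le_choose_two[of "3 * n"] n unfolding N_def by simp
  then have L: "linear_3uniform (E n)" and G: "girth_greater (E n) N" and "E n \<noteq> {}"
    using hyp[OF n] linear_if_girth_greater n unfolding N_def two_colourable_def by auto
  have "\<forall>(u, v)\<in>\<Sigma>'. flat_satisfies None Sc_mul Sc_carrier u v"
    using flat_semiring.derivable_sound[OF Sc_flat_semiring basis] contains_Sc from_\<Sigma>
    unfolding Sc_satisfies_eq by blast
  then have "\<forall>(u, v)\<in>\<Sigma>'. flat_satisfies Inf (hmul (E n)) UNIV u v"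
    using SH_satisfies_Sc_identity[OF L G] \<Sigma>' M \<open>n \<le> N\<close> unfolding identity_set_def n_def by fastforce
  then have "\<forall>(u, v)\<in>\<Sigma>. flat_satisfies Inf (hmul (E n)) UNIV u v"
    using flat_semiring.derivable_sound[OF SH_flat_semiring[OF L] \<Sigma>'] to_\<Sigma> by blast
  then have "flat_satisfies Inf (hmul (E n)) UNIV (t_H (E n)) (tsum (t_H (E n)) (w n))"
    using flat_semiring.derivable_sound[OF SH_flat_semiring[OF L] basis] sat[OF n] by blast
  then show False using SH_refutes_t_H_identity[OF L \<open>E n \<noteq> {}\<close> w_nonhyp[OF n]] by contradiction
qed

end
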